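(* Let $T$ be an unbounded selfadjoint operator in $H$. Then \[ W_e(T)=\operatorname{conv}\big(\widehat\sigma_e(T)\big)\setminus\{\pm\infty\}. \]
   Context: $H$ is a separable infinite-dimensional complex Hilbert space. $W_e(T)=\{\lambda\in\mathbb C:\exists x_n\in\operatorname{dom}(T),\|x_n\|=1,x_n\stackrel{w}{\to}0,\langle Tx_n,x_n\rangle\to\lambda\}$. $\sigma_e(T)=\{\lambda:\exists x_n\in\operatorname{dom}(T),\|x_n\|=1,x_n\stackrel{w}{\to}0,\|(T-\lambda)x_n\|\to0\}$. For selfadjoint $T$, the extended essential spectrum $\widehat\sigma_e(T)\subset\mathbb R\cup\{+\infty,-\infty\}$ is $\sigma_e(T)$ with $+\infty$ added if $T$ is unbounded from above and $-\infty$ added if $T$ is unbounded from below; the convex hull is taken in the extended real line $\mathbb R\cup\{\pm\infty\}$. *)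

theory Defs
  imports Complex_Main "HOL-Library.Extended_Real"
begin

text \<open>The separable infinite-dimensional complex Hilbert space H is modelled
  (up to unitary equivalence) by l2(N), square-summable complex sequences.\<close>

type_synonym vec = "nat \<Rightarrow> complex"

definition vadd :: "vec \<Rightarrow> vec \<Rightarrow> vec" where
  "vadd x y = (\<lambda>n. x n + y n)"

definition vsub :: "vec \<Rightarrow> vec \<Rightarrow> vec" where
  "vsub x y = (\<lambda>n. x n - y n)"

definition l2 :: "vec set" where
  "l2 = {x. summable (\<lambda>n. (cmod (x n))\<^sup>2)}"

definition l2norm :: "vec \<Rightarrow> real" where
  "l2norm x = sqrt (\<Sum>n. (cmod (x n))\<^sup>2)"

definition linner :: "vec \<Rightarrow> vec \<Rightarrow> complex" where
  "linner x y = (\<Sum>n. x n * cnj (y n))"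

definition weak_to_zero :: "(nat \<Rightarrow> vec) \<Rightarrow> bool" where
  "weak_to_zero xs \<longleftrightarrow> (\<forall>y\<in>l2. (\<lambda>k. linner (xs k) y) \<longlonglongrightarrow> 0)"

definition lin_op :: "vec set \<Rightarrow> (vec \<Rightarrow> vec) \<Rightarrow> bool" where
  "lin_op D T \<longleftrightarrow> D \<subseteq> l2 \<and> (\<lambda>n. 0) \<in> D \<and>
     (\<forall>x\<in>D. \<forall>y\<in>D. vadd x y \<in> D) \<and> (\<forall>c. \<forall>x\<in>D. (\<lambda>n. c * x n) \<in> D) \<and>
     (\<forall>x\<in>D. T x \<in> l2) \<and>
     (\<forall>x\<in>D. \<forall>y\<in>D. T (vadd x y) = vadd (T x) (T y)) \<and>
     (\<forall>c. \<forall>x\<in>D. T (\<lambda>n. c * x n) = (\<lambda>n. c * T x n))"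

definition densely_defined :: "vec set \<Rightarrow> bool" where
  "densely_defined D \<longleftrightarrow> (\<forall>x\<in>l2. \<forall>e>0. \<exists>d\<in>D. l2norm (vsub x d) < e)"

text \<open>Selfadjoint: densely defined and T = T*, i.e. dom T* = dom T and T* = T on it.\<close>
definition selfadjoint :: "vec set \<Rightarrow> (vec \<Rightarrow> vec) \<Rightarrow> bool" where
  "selfadjoint D T \<longleftrightarrow> lin_op D T \<and> densely_defined D \<and>
     (\<forall>y\<in>l2. y \<in> D \<longleftrightarrow> (\<exists>z\<in>l2. \<forall>x\<in>D. linner (T x) y = linner x z)) \<and>
     (\<forall>x\<in>D. \<forall>y\<in>D. linner (T x) y = linner x (T y))"

definition bounded_op :: "vec set \<Rightarrow> (vec \<Rightarrow> vec) \<Rightarrow> bool" where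
  "bounded_op D T \<longleftrightarrow> (\<exists>C. \<forall>x\<in>D. l2norm (T x) \<le> C * l2norm x)"

definition bounded_above_op :: "vec set \<Rightarrow> (vec \<Rightarrow> vec) \<Rightarrow> bool" where
  "bounded_above_op D T \<longleftrightarrow> (\<exists>C. \<forall>x\<in>D. Re (linner (T x) x) \<le> C * (l2norm x)\<^sup>2)"

definition bounded_below_op :: "vec set \<Rightarrow> (vec \<Rightarrow> vec) \<Rightarrow> bool" where
  "bounded_below_op D T \<longleftrightarrow> (\<exists>C. \<forall>x\<in>D. C * (l2norm x)\<^sup>2 \<le> Re (linner (T x) x))"

definition ess_num_range :: "vec set \<Rightarrow> (vec \<Rightarrow> vec) \<Rightarrow> complex set" where
  "ess_num_range D T = {\<mu>. \<exists>xs. (\<forall>k. xs k \<in> D \<and> l2norm (xs k) = 1) \<and> weak_to_zero xs \<and>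
       (\<lambda>k. linner (T (xs k)) (xs k)) \<longlonglongrightarrow> \<mu>}"

definition ess_spec :: "vec set \<Rightarrow> (vec \<Rightarrow> vec) \<Rightarrow> complex set" where
  "ess_spec D T = {\<mu>. \<exists>xs. (\<forall>k. xs k \<in> D \<and> l2norm (xs k) = 1) \<and> weak_to_zero xs \<and>
       (\<lambda>k. l2norm (vsub (T (xs k)) (\<lambda>n. \<mu> * xs k n))) \<longlonglongrightarrow> 0}"

text \<open>Extended essential spectrum of a selfadjoint operator (its essential spectrum is real).\<close>
definition ext_ess_spec :: "vec set \<Rightarrow> (vec \<Rightarrow> vec) \<Rightarrow> ereal set" where
  "ext_ess_spec D T = ereal ` {r. complex_of_real r \<in> ess_spec D T}
     \<union> (if bounded_above_op D T then {} else {\<infinity>})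
     \<union> (if bounded_below_op D T then {} else {-\<infinity>})"

text \<open>Convex hull in the extended real line (= order-convex hull).\<close>
definition conv_ereal :: "ereal set \<Rightarrow> ereal set" where
  "conv_ereal S = {x. \<exists>a\<in>S. \<exists>b\<in>S. a \<le> x \<and> x \<le> b}"

end

(* W_e(T) is described through two kinds of sequences of unit vectors converging weakly to 0:
   those along which the quadratic form <T x, x> stays below a level l and those along which it
   stays above.  Given one of each, convex combinations of almost orthogonal members realise the
   value l exactly, so l lies in W_e(T).  Such sequences exist on either side of l as soon as
   sigma_e(T) has a point beyond l or the form is unbounded on that side.  Conversely, if the
   form is bounded above by C and l lies in W_e(T), the resolvent R = (C + 1 - T)^-1 is a bounded
   symmetric operator with 0 <= R <= 1, and an inequality of Jensen type shows that W_e(R)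
   contains a point >= 1/(C + 1 - l).  For bounded symmetric R the supremum r of W_e(R) lies in
   sigma_e(R): beyond a finite-dimensional subspace R <= r + eps, and Cauchy-Schwarz for the
   nonnegative form of r + eps - R turns almost maximising vectors into approximate eigenvectors.
   Hence C + 1 - 1/r is a point of sigma_e(T) above l; the case of a form bounded below follows
   by passing to -T.  The complex space l2 is treated as a real Hilbert space with inner product
   Re <x, y>, which changes neither W_e(T) nor the real points of sigma_e(T). *)

theory Submission
  imports Defs "HOL-Analysis.Inner_Product" "HOL-Analysis.Elementary_Topology"
begin

section \<open>Orthonormal sequences and weak convergence\<close>

lemma nonneg_quadratic_discriminant:
  fixes a b c :: real
  assumes "\<And>t. 0 \<le> a + 2*b*t + c*t\<^sup>2"
  shows "b\<^sup>2 \<le> a*c"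
proof -
  have a0: "0 \<le> a" using assms[of 0] by simp
  show ?thesis
  proof (cases "c = 0")
    case True
    show ?thesis
    proof (rule ccontr)
      assume "\<not> ?thesis"
      then have "b \<noteq> 0" using True by simp
      have "0 \<le> a + 2*b*(-(a+1)/(2*b)) + c*(-(a+1)/(2*b))\<^sup>2" by (rule assms)
      also have "\<dots> = -1" using True \<open>b\<noteq>0\<close> by (simp add: field_simps)
      finally show False by simp
    qed
  next
    case False
    have c0: "c > 0"
    proof (rule ccontr)
      assume "\<not> c > 0" then have "c < 0" using False by simp
      define t where "t = sqrt ((a+1)/(-c))"
      have tt: "t\<^sup>2 = (a+1)/(-c)" unfolding t_def using a0 \<open>c<0\<close> by (simp add: divide_nonneg_neg)
      have "0 \<le> a + 2*b*t + c*t\<^sup>2" "0 \<le> a + 2*b*(-t) + c*(-t)\<^sup>2" by (rule assms)+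
      then have "0 \<le> 2*a + 2*c*t\<^sup>2" by simp
      also have "2*c*t\<^sup>2 = -2*(a+1)" unfolding tt using \<open>c<0\<close> by (simp add: field_simps)
      finally show False by simp
    qed
    have "0 \<le> a + 2*b*(-b/c) + c*(-b/c)\<^sup>2" by (rule assms)
    also have "\<dots> = a - b\<^sup>2/c" using c0 by (simp add: field_simps power2_eq_square)
    finally show ?thesis using c0 by (simp add: field_simps)
  qed
qed

definition orthonormal_upto :: "(nat \<Rightarrow> 'a::real_inner) \<Rightarrow> nat \<Rightarrow> bool" where
  "orthonormal_upto e n \<longleftrightarrow>
     (\<forall>i<n. norm (e i) = 1) \<and> (\<forall>i<n. \<forall>j<n. i \<noteq> j \<longrightarrow> inner (e i) (e j) = 0)"

definition orthonormal_seq :: "(nat \<Rightarrow> 'a::real_inner) \<Rightarrow> bool" where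
  "orthonormal_seq e \<longleftrightarrow> (\<forall>i. norm (e i) = 1) \<and> (\<forall>i j. i \<noteq> j \<longrightarrow> inner (e i) (e j) = 0)"

lemma orthonormal_upto_inner:
  "orthonormal_upto e n \<Longrightarrow> i < n \<Longrightarrow> j < n \<Longrightarrow> inner (e i) (e j) = (if i = j then 1 else 0)"
  unfolding orthonormal_upto_def by (auto simp: dot_square_norm)

lemma orthonormal_seq_inner:
  "orthonormal_seq e \<Longrightarrow> inner (e i) (e j) = (if i = j then 1 else 0)"
  unfolding orthonormal_seq_def by (auto simp: dot_square_norm)

lemma orthonormal_seq_shift: "orthonormal_seq e \<Longrightarrow> orthonormal_seq (\<lambda>k. e (k + N))"
  unfolding orthonormal_seq_def by auto

lemma orthonormal_seq_by_extension:
  fixes R :: "nat \<Rightarrow> 'a::real_inner \<Rightarrow> bool"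
  assumes step: "\<And>n e. orthonormal_upto e n \<Longrightarrow> \<forall>i<n. R i (e i) \<Longrightarrow>
      \<exists>y. R n y \<and> norm y = 1 \<and> (\<forall>i<n. inner y (e i) = 0)"
  obtains e where "\<And>n. R n (e n)" "orthonormal_seq e"
proof -
  let ?P = "\<lambda>n e. orthonormal_upto e n \<and> (\<forall>i<n. R i (e i))"
  let ?Q = "\<lambda>n e e'. \<forall>i<n. e' i = e i"
  have "\<exists>f. \<forall>n. ?P n (f n) \<and> ?Q n (f n) (f (Suc n))"
  proof (rule dependent_nat_choice)
    show "\<exists>x. ?P 0 x" by (auto simp: orthonormal_upto_def)
  next
    fix e n assume "?P n e"
    then obtain y where y: "R n y" "norm y = 1" "\<forall>i<n. inner y (e i) = 0"
      using step by blast
    have "?P (Suc n) (e(n := y))"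
      using \<open>?P n e\<close> y unfolding orthonormal_upto_def
      by (auto simp: less_Suc_eq inner_commute)
    then show "\<exists>e'. ?P (Suc n) e' \<and> ?Q n e e'" by force
  qed
  then obtain f where f: "\<And>n. ?P n (f n)" "\<And>n. ?Q n (f n) (f (Suc n))" by blast
  have stable: "f m i = f (Suc i) i" if "i < m" for m i
    using that by (induction m) (use f(2) less_Suc_eq in auto)
  define e where "e i = f (Suc i) i" for i
  have "R n (e n)" for n using f(1)[of "Suc n"] by (simp add: e_def)
  moreover have "orthonormal_seq e"
    unfolding orthonormal_seq_def
  proof (intro conjI allI impI)
    show "norm (e n) = 1" for n using f(1)[of "Suc n"] by (simp add: e_def orthonormal_upto_def)
    show "inner (e i) (e j) = 0" if "i \<noteq> j" for i j
    proof -
      have "e i = f (Suc (max i j)) i" "e j = f (Suc (max i j)) j"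
        unfolding e_def using stable[of i "Suc (max i j)"] stable[of j "Suc (max i j)"] by simp_all
      then show ?thesis using f(1)[of "Suc (max i j)"] that unfolding orthonormal_upto_def by auto
    qed
  qed
  ultimately show ?thesis using that by blast
qed

lemma bessel_inequality:
  fixes e :: "nat \<Rightarrow> 'a::real_inner"
  assumes "orthonormal_seq e"
  shows "(\<Sum>i<n. (inner y (e i))\<^sup>2) \<le> (norm y)\<^sup>2"
proof -
  note orth = orthonormal_seq_inner[OF assms]
  define p where "p = (\<Sum>i<n. inner y (e i) *\<^sub>R e i)"
  have yp: "inner y p = (\<Sum>i<n. (inner y (e i))\<^sup>2)"
    unfolding p_def by (simp add: inner_sum_right power2_eq_square)
  have pp: "inner p p = (\<Sum>i<n. (inner y (e i))\<^sup>2)"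
    unfolding p_def
    by (simp add: orth inner_sum_right inner_sum_left power2_eq_square if_distrib sum.If_cases)
  have "0 \<le> inner (y - p) (y - p)" by simp
  also have "\<dots> = inner y y - 2 * inner y p + inner p p" by (simp add: inner_diff inner_commute)
  finally show ?thesis using yp pp by (simp add: dot_square_norm)
qed

lemma LIMSEQ_zero_if_norm_le:
  fixes f :: "nat \<Rightarrow> 'a::real_normed_vector" and g :: "nat \<Rightarrow> 'b::real_normed_vector"
  assumes "g \<longlonglongrightarrow> 0" "\<And>k. norm (f k) \<le> K * norm (g k)"
  shows "f \<longlonglongrightarrow> 0"
  by (rule tendsto_0_le[where K=K, OF assms(1) always_eventually]) (simp add: assms(2) mult.commute)

lemma small_error_bound:
  fixes \<delta> C :: real
  assumes "0 < \<delta>"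
  obtains \<epsilon> where "0 < \<epsilon>" "\<epsilon> \<le> 1" "2 * (\<epsilon> + sqrt (2 * \<epsilon> * C)) < \<delta>"
proof -
  have "((\<lambda>\<epsilon>. 2 * (\<epsilon> + sqrt (2 * \<epsilon> * C))) \<longlongrightarrow> 2 * (0 + sqrt (2 * 0 * C))) (at_right 0)"
    by (intro tendsto_intros)
  then have "eventually (\<lambda>\<epsilon>. 2 * (\<epsilon> + sqrt (2 * \<epsilon> * C)) < \<delta>) (at_right 0)"
    using assms by (simp add: order_tendsto_iff)
  then obtain b where "0 < b" "\<And>\<epsilon>. 0 < \<epsilon> \<Longrightarrow> \<epsilon> < b \<Longrightarrow> 2 * (\<epsilon> + sqrt (2 * \<epsilon> * C)) < \<delta>"
    unfolding eventually_at_right_field by blast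
  then show ?thesis using that[of "min (b / 2) 1"] by simp
qed

definition weakly_null :: "(nat \<Rightarrow> 'a::real_inner) \<Rightarrow> bool" where
  "weakly_null xs \<longleftrightarrow> (\<forall>y. (\<lambda>k. inner (xs k) y) \<longlonglongrightarrow> 0)"

lemma orthonormal_seq_weakly_null:
  assumes "orthonormal_seq e"
  shows "weakly_null e"
  unfolding weakly_null_def
proof
  fix y
  have "summable (\<lambda>i. (inner y (e i))\<^sup>2)"
    using bessel_inequality[OF assms] by (intro summableI_nonneg_bounded) auto
  then have "(\<lambda>i. sqrt ((inner y (e i))\<^sup>2)) \<longlonglongrightarrow> sqrt 0"
    by (intro tendsto_real_sqrt summable_LIMSEQ_zero)
  then show "(\<lambda>k. inner (e k) y) \<longlonglongrightarrow> 0"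
    by (simp add: inner_commute tendsto_rabs_zero_iff)
qed

lemma weakly_null_subseq: "weakly_null xs \<Longrightarrow> strict_mono f \<Longrightarrow> weakly_null (xs \<circ> f)"
  unfolding weakly_null_def using LIMSEQ_subseq_LIMSEQ[of _ 0 f] by (auto simp: comp_def)

lemma weakly_null_shift: "weakly_null xs \<Longrightarrow> weakly_null (\<lambda>k. xs (k + N))"
  unfolding weakly_null_def by (auto intro: LIMSEQ_ignore_initial_segment[where k=N, of _ 0, simplified])

lemma weakly_null_reindex:
  assumes "weakly_null xs" "\<And>k. k \<le> m k"
  shows "weakly_null (\<lambda>k. xs (m k))"
proof -
  have m: "filterlim m sequentially sequentially"
    using assms(2) by (intro filterlim_at_top_mono[OF filterlim_ident]) auto
  show ?thesis
    unfolding weakly_null_def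
  proof
    fix y
    have "(\<lambda>k. inner (xs k) y) \<longlonglongrightarrow> 0" using assms(1) unfolding weakly_null_def by blast
    from filterlim_compose[OF this m] show "(\<lambda>k. inner (xs (m k)) y) \<longlonglongrightarrow> 0" by simp
  qed
qed

lemma weakly_null_almost_orthogonal_reindex:
  assumes "weakly_null ys" "0 < \<epsilon>"
  shows "\<exists>m. (\<forall>k. k \<le> m k) \<and> (\<forall>k. \<bar>inner (x k) (ys (m k))\<bar> \<le> \<epsilon>)"
proof -
  have "\<exists>j\<ge>k. \<bar>inner (x k) (ys j)\<bar> \<le> \<epsilon>" for k
  proof -
    have "(\<lambda>j. inner (ys j) (x k)) \<longlonglongrightarrow> 0" using assms(1) unfolding weakly_null_def by blast
    from tendstoD[OF this assms(2)]
    obtain N where "\<And>j. N \<le> j \<Longrightarrow> \<bar>inner (x k) (ys j)\<bar> < \<epsilon>"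
      unfolding eventually_sequentially by (auto simp: dist_real_def inner_commute)
    then show ?thesis by (intro exI[of _ "max k N"]) (simp add: less_imp_le)
  qed
  then show ?thesis by metis
qed

lemma LIMSEQ_zero_imp_weakly_null:
  assumes "xs \<longlonglongrightarrow> 0"
  shows "weakly_null xs"
  unfolding weakly_null_def
proof
  fix y
  have "(\<lambda>k. inner (xs k) y) \<longlonglongrightarrow> inner 0 y" using assms by (intro tendsto_intros)
  then show "(\<lambda>k. inner (xs k) y) \<longlonglongrightarrow> 0" by simp
qed

lemma weakly_null_add:
  assumes "weakly_null xs" "weakly_null ys"
  shows "weakly_null (\<lambda>k. xs k + ys k)"
  unfolding weakly_null_def
proof
  fix y
  have "(\<lambda>k. inner (xs k) y + inner (ys k) y) \<longlonglongrightarrow> 0 + 0"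
    using assms unfolding weakly_null_def by (intro tendsto_add) blast+
  then show "(\<lambda>k. inner (xs k + ys k) y) \<longlonglongrightarrow> 0" by (simp add: inner_add_left)
qed

lemma weakly_null_scaled:
  assumes "weakly_null xs" "\<And>k. \<bar>c k\<bar> \<le> C"
  shows "weakly_null (\<lambda>k. c k *\<^sub>R xs k)"
  unfolding weakly_null_def
proof
  fix y
  have lim: "(\<lambda>k. inner (xs k) y) \<longlonglongrightarrow> 0" using assms(1) unfolding weakly_null_def by blast
  have "norm (inner (c k *\<^sub>R xs k) y) \<le> C * norm (inner (xs k) y)" for k
    using mult_right_mono[OF assms(2)[of k], of "\<bar>inner (xs k) y\<bar>"] by (simp add: abs_mult)
  then show "(\<lambda>k. inner (c k *\<^sub>R xs k) y) \<longlonglongrightarrow> 0"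
    by (rule LIMSEQ_zero_if_norm_le[OF lim])
qed

lemma weakly_null_diff:
  assumes "weakly_null xs" "weakly_null ys"
  shows "weakly_null (\<lambda>k. xs k - ys k)"
  using weakly_null_add[OF assms(1) weakly_null_scaled[OF assms(2), of "\<lambda>_. -1" 1]] by simp

lemma weakly_null_sgn:
  assumes "weakly_null xs" "0 < \<delta>" "\<And>k. \<delta> \<le> norm (xs k)"
  shows "weakly_null (\<lambda>k. sgn (xs k))"
proof -
  have "\<bar>inverse (norm (xs k))\<bar> \<le> inverse \<delta>" for k
    using assms(2) assms(3)[of k] by (simp add: le_imp_inverse_le)
  from weakly_null_scaled[OF assms(1), of "\<lambda>k. inverse (norm (xs k))", OF this]
  show ?thesis by (simp add: sgn_div_norm)
qed

definition orth_proj :: "(nat \<Rightarrow> 'a::real_inner) \<Rightarrow> nat \<Rightarrow> 'a \<Rightarrow> 'a" where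
  "orth_proj e n x = (\<Sum>i<n. inner x (e i) *\<^sub>R e i)"

lemma orth_proj_perp:
  assumes "orthonormal_upto e n" "j < n"
  shows "inner (x - orth_proj e n x) (e j) = 0"
proof -
  have "inner (orth_proj e n x) (e j) = (\<Sum>i<n. inner x (e i) * (if i = j then 1 else 0))"
    unfolding orth_proj_def by (simp add: inner_sum_left orthonormal_upto_inner[OF assms(1) _ assms(2)])
  also have "\<dots> = inner x (e j)" using assms(2) by (simp add: if_distrib sum.delta cong: if_cong)
  finally show ?thesis by (simp add: inner_diff_left)
qed

lemma inner_orth_proj_perp:
  assumes "\<forall>j<n. inner v (e j) = 0"
  shows "inner (orth_proj e n x) v = 0"
proof -
  have "inner (e i) v = 0" if "i < n" for i using assms that by (simp add: inner_commute)
  then show ?thesis unfolding orth_proj_def by (simp add: inner_sum_left)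
qed

lemma norm_orth_proj_le:
  assumes "orthonormal_upto e n"
  shows "norm (orth_proj e n x) \<le> real n * norm x"
proof -
  have "norm (inner x (e i) *\<^sub>R e i) \<le> norm x" if "i < n" for i
    using Cauchy_Schwarz_ineq2[of x "e i"] assms that by (simp add: orthonormal_upto_def)
  then have "norm (orth_proj e n x) \<le> (\<Sum>i<n. norm x)"
    unfolding orth_proj_def by (intro order_trans[OF norm_sum sum_mono]) auto
  then show ?thesis by simp
qed

lemma orth_proj_LIMSEQ_zero:
  assumes "\<And>i. i < n \<Longrightarrow> (\<lambda>k. inner (xs k) (e i)) \<longlonglongrightarrow> 0"
  shows "(\<lambda>k. orth_proj e n (xs k)) \<longlonglongrightarrow> 0"
  unfolding orth_proj_def
proof (rule tendsto_null_sum)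
  fix i assume "i \<in> {..<n}"
  then have "(\<lambda>k. inner (xs k) (e i) *\<^sub>R e i) \<longlonglongrightarrow> 0 *\<^sub>R e i"
    using assms by (intro tendsto_scaleR tendsto_const) auto
  then show "(\<lambda>k. inner (xs k) (e i) *\<^sub>R e i) \<longlonglongrightarrow> 0" by simp
qed

lemma norm_convex_combination_ge:
  fixes x y :: "'a::real_inner"
  assumes "norm x = 1" "norm y = 1" "\<bar>inner x y\<bar> \<le> 1/8" "0 \<le> t" "t \<le> 1"
  shows "1/2 \<le> norm ((1 - t) *\<^sub>R x + t *\<^sub>R y)"
proof -
  have c0: "0 \<le> 2 * (1 - t) * t" using assms(4,5) by simp
  have "(1 - t)\<^sup>2 + t\<^sup>2 + 2 * (1 - t) * t * (-1/8) = (1/2)\<^sup>2 + 3/16 + 9/4 * (t - 1/2)\<^sup>2"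
    by (simp add: power2_eq_square field_simps)
  then have "(1/2)\<^sup>2 \<le> (1 - t)\<^sup>2 + t\<^sup>2 + 2 * (1 - t) * t * (-1/8)" by simp
  also have "\<dots> \<le> (1 - t)\<^sup>2 + t\<^sup>2 + 2 * (1 - t) * t * inner x y"
    using mult_left_mono[OF _ c0, of "-1/8" "inner x y"] assms(3) by simp
  also have "\<dots> = (norm ((1 - t) *\<^sub>R x + t *\<^sub>R y))\<^sup>2"
  proof -
    have "inner x x = 1" "inner y y = 1"
      using assms(1,2) by (metis power2_norm_eq_inner one_power2)+
    then show ?thesis unfolding power2_norm_eq_inner
      by (simp add: inner_add_left inner_add_right inner_commute[of y x] power2_eq_square algebra_simps)
  qed
  finally show ?thesis by (rule power2_le_imp_le) simp
qed

section \<open>Essential numerical range and essential spectrum\<close>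

definition unit_weakly_null :: "'a::real_inner set \<Rightarrow> (nat \<Rightarrow> 'a) \<Rightarrow> bool" where
  "unit_weakly_null D xs \<longleftrightarrow> (\<forall>k. xs k \<in> D \<and> norm (xs k) = 1) \<and> weakly_null xs"

definition ess_numrange :: "'a::real_inner set \<Rightarrow> ('a \<Rightarrow> 'a) \<Rightarrow> real set" where
  "ess_numrange D T =
     {l. \<exists>xs. unit_weakly_null D xs \<and> (\<lambda>k. inner (T (xs k)) (xs k)) \<longlonglongrightarrow> l}"

definition ess_spectrum :: "'a::real_inner set \<Rightarrow> ('a \<Rightarrow> 'a) \<Rightarrow> real set" where
  "ess_spectrum D T =
     {l. \<exists>xs. unit_weakly_null D xs \<and> (\<lambda>k. norm (T (xs k) - l *\<^sub>R xs k)) \<longlonglongrightarrow> 0}"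

definition form_bdd_above :: "'a::real_inner set \<Rightarrow> ('a \<Rightarrow> 'a) \<Rightarrow> bool" where
  "form_bdd_above D T \<longleftrightarrow> (\<exists>C. \<forall>x\<in>D. inner (T x) x \<le> C * (norm x)\<^sup>2)"

definition form_bdd_below :: "'a::real_inner set \<Rightarrow> ('a \<Rightarrow> 'a) \<Rightarrow> bool" where
  "form_bdd_below D T \<longleftrightarrow> (\<exists>C. \<forall>x\<in>D. C * (norm x)\<^sup>2 \<le> inner (T x) x)"

lemma orthonormal_seq_unit_weakly_null:
  assumes "orthonormal_seq e" "\<And>k. e k \<in> D"
  shows "unit_weakly_null D e"
  using assms orthonormal_seq_weakly_null[OF assms(1)]
  unfolding unit_weakly_null_def orthonormal_seq_def by simp

lemma unit_weakly_null_eventually: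
  assumes "unit_weakly_null D xs" "eventually (\<lambda>k. P (xs k)) sequentially"
  obtains ys where "unit_weakly_null D ys" "\<And>k. P (ys k)"
proof -
  obtain N where "\<And>k. k \<ge> N \<Longrightarrow> P (xs k)" using assms(2) unfolding eventually_sequentially by blast
  moreover have "unit_weakly_null D (\<lambda>k. xs (k + N))"
    using assms(1) weakly_null_shift unfolding unit_weakly_null_def by blast
  ultimately show ?thesis using that[of "\<lambda>k. xs (k + N)"] by simp
qed

lemma ess_numrange_subseq_limit:
  assumes xs: "unit_weakly_null D xs" and bound: "\<And>k. \<bar>inner (T (xs k)) (xs k)\<bar> \<le> M"
  obtains f v where "strict_mono f" "(\<lambda>n. inner (T (xs (f n))) (xs (f n))) \<longlonglongrightarrow> v"
    "v \<in> ess_numrange D T"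
proof -
  obtain f where f: "strict_mono f" "monoseq (\<lambda>n. inner (T (xs (f n))) (xs (f n)))"
    using seq_monosub[of "\<lambda>k. inner (T (xs k)) (xs k)"] by blast
  have "Bseq (\<lambda>n. inner (T (xs (f n))) (xs (f n)))" using bound by (intro BseqI') auto
  with f(2) obtain v where v: "(\<lambda>n. inner (T (xs (f n))) (xs (f n))) \<longlonglongrightarrow> v"
    using Bseq_monoseq_convergent convergent_def by blast
  have "unit_weakly_null D (xs \<circ> f)"
    using xs weakly_null_subseq[of xs f] f(1) unfolding unit_weakly_null_def by auto
  then have "v \<in> ess_numrange D T" using v unfolding ess_numrange_def by (auto simp: comp_def)
  with f(1) v show ?thesis using that by blast
qed

lemma ess_numrange_between:
  assumes xs: "unit_weakly_null D xs"
    and bounds: "\<And>k. a \<le> inner (T (xs k)) (xs k)" "\<And>k. inner (T (xs k)) (xs k) \<le> b"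
  obtains v where "v \<in> ess_numrange D T" "a \<le> v" "v \<le> b"
proof -
  have "\<bar>inner (T (xs k)) (xs k)\<bar> \<le> \<bar>a\<bar> + \<bar>b\<bar>" for k
    using bounds[of k] by linarith
  then obtain f v where f: "strict_mono f" "(\<lambda>n. inner (T (xs (f n))) (xs (f n))) \<longlonglongrightarrow> v"
    and v: "v \<in> ess_numrange D T"
    using ess_numrange_subseq_limit[OF xs] by blast
  have "a \<le> v" using f(2) bounds(1) by (intro LIMSEQ_le_const) auto
  moreover have "v \<le> b" using f(2) bounds(2) by (intro LIMSEQ_le_const2) auto
  ultimately show ?thesis using v that by blast
qed

lemma ess_numrange_le_form_bound:
  assumes "\<And>x. x \<in> D \<Longrightarrow> inner (T x) x \<le> C * (norm x)\<^sup>2" "l \<in> ess_numrange D T"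
  shows "l \<le> C"
proof -
  obtain xs where xs: "unit_weakly_null D xs" "(\<lambda>k. inner (T (xs k)) (xs k)) \<longlonglongrightarrow> l"
    using assms(2) unfolding ess_numrange_def by blast
  have "inner (T (xs k)) (xs k) \<le> C" for k
    using assms(1)[of "xs k"] xs(1) by (simp add: unit_weakly_null_def)
  with xs(2) show ?thesis by (intro LIMSEQ_le_const2) auto
qed

lemma ess_spectrum_subset_ess_numrange: "ess_spectrum D T \<subseteq> ess_numrange D T"
proof
  fix l assume "l \<in> ess_spectrum D T"
  then obtain xs where xs: "unit_weakly_null D xs"
    and lim: "(\<lambda>k. norm (T (xs k) - l *\<^sub>R xs k)) \<longlonglongrightarrow> 0" unfolding ess_spectrum_def by blast
  have unit: "norm (xs k) = 1" for k using xs unfolding unit_weakly_null_def by blast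
  have "norm (inner (T (xs k)) (xs k) - l) \<le> 1 * norm (norm (T (xs k) - l *\<^sub>R xs k))" for k
  proof -
    have "inner (T (xs k)) (xs k) - l = inner (T (xs k) - l *\<^sub>R xs k) (xs k)"
      using unit[of k] by (simp add: inner_diff_left dot_square_norm)
    then show ?thesis
      using Cauchy_Schwarz_ineq2[of "T (xs k) - l *\<^sub>R xs k" "xs k"] unit[of k] by simp
  qed
  then have "(\<lambda>k. inner (T (xs k)) (xs k) - l) \<longlonglongrightarrow> 0"
    by (rule LIMSEQ_zero_if_norm_le[OF lim])
  then show "l \<in> ess_numrange D T"
    using xs unfolding ess_numrange_def by (auto simp: LIM_zero_iff)
qed

section \<open>Symmetric operators\<close>

locale symmetric_operator =
  fixes D :: "'a::real_inner set" and T :: "'a \<Rightarrow> 'a"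
  assumes subspace_dom: "subspace D"
    and T_add: "x \<in> D \<Longrightarrow> y \<in> D \<Longrightarrow> T (x + y) = T x + T y"
    and T_scaleR: "x \<in> D \<Longrightarrow> T (c *\<^sub>R x) = c *\<^sub>R T x"
    and symmetric: "x \<in> D \<Longrightarrow> y \<in> D \<Longrightarrow> inner (T x) y = inner x (T y)"
begin

lemma dom_zero: "0 \<in> D"
  and dom_add: "x \<in> D \<Longrightarrow> y \<in> D \<Longrightarrow> x + y \<in> D"
  and dom_scaleR: "x \<in> D \<Longrightarrow> c *\<^sub>R x \<in> D"
  and dom_diff: "x \<in> D \<Longrightarrow> y \<in> D \<Longrightarrow> x - y \<in> D"
  and dom_sum: "(\<And>i. i \<in> A \<Longrightarrow> f i \<in> D) \<Longrightarrow> sum f A \<in> D"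
  using subspace_dom by (auto intro: subspace_0 subspace_add subspace_scale subspace_diff subspace_sum)

lemma T_zero: "T 0 = 0"
  using T_scaleR[OF dom_zero, of 0] by simp

lemma T_diff: "x \<in> D \<Longrightarrow> y \<in> D \<Longrightarrow> T (x - y) = T x - T y"
  using T_add[of x "(-1) *\<^sub>R y"] T_scaleR[of y "-1"] dom_scaleR[of y "-1"] by simp

lemma T_sum: "finite A \<Longrightarrow> (\<And>i. i \<in> A \<Longrightarrow> e i \<in> D) \<Longrightarrow>
    T (\<Sum>i\<in>A. c i *\<^sub>R e i) = (\<Sum>i\<in>A. c i *\<^sub>R T (e i))"
proof (induction A rule: finite_induct)
  case empty then show ?case by (simp add: T_zero)
next
  case (insert a A)
  then show ?case by (simp add: T_add T_scaleR dom_scaleR dom_sum)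
qed

lemma form_add: "x \<in> D \<Longrightarrow> y \<in> D \<Longrightarrow>
   inner (T (x + y)) (x + y) = inner (T x) x + 2 * inner (T x) y + inner (T y) y"
  using symmetric[of y x] by (simp add: T_add inner_add_left inner_add_right inner_commute)

lemma form_scaleR: "x \<in> D \<Longrightarrow> inner (T (c *\<^sub>R x)) (c *\<^sub>R x) = c\<^sup>2 * inner (T x) x"
  by (simp add: T_scaleR power2_eq_square)

lemma form_sgn: "x \<in> D \<Longrightarrow> inner (T (sgn x)) (sgn x) = inner (T x) x / (norm x)\<^sup>2"
  using form_scaleR[of x "inverse (norm x)"] by (simp add: sgn_div_norm power_inverse divide_inverse)

lemma symmetric_operator_affine: "symmetric_operator D (\<lambda>x. a *\<^sub>R x + b *\<^sub>R T x)"
  by unfold_locales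
    (simp_all add: subspace_dom T_add T_scaleR symmetric scaleR_add_right inner_add_left inner_add_right
      mult.commute)

lemma form_cauchy_schwarz:
  assumes "u \<in> D" "v \<in> D" "\<And>t. 0 \<le> inner (T (u + t *\<^sub>R v)) (u + t *\<^sub>R v)"
  shows "(inner (T u) v)\<^sup>2 \<le> inner (T u) u * inner (T v) v"
proof (rule nonneg_quadratic_discriminant)
  fix t
  have "inner (T (u + t *\<^sub>R v)) (u + t *\<^sub>R v) = inner (T u) u + 2 * inner (T u) v * t + inner (T v) v * t\<^sup>2"
    using form_add[OF assms(1) dom_scaleR[OF assms(2)]] form_scaleR[OF assms(2)]
    by (simp add: T_scaleR algebra_simps)
  then show "0 \<le> inner (T u) u + 2 * inner (T u) v * t + inner (T v) v * t\<^sup>2"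
    using assms(3)[of t] by simp
qed

lemma symmetric_operator_uminus: "symmetric_operator D (\<lambda>x. - T x)"
  using symmetric_operator_affine[of 0 "-1"] by simp

lemma norm_T_sgn_minus_scaleR:
  assumes "x \<in> D"
  shows "norm (T (sgn x) - c *\<^sub>R sgn x) = norm (T x - c *\<^sub>R x) / norm x"
proof -
  have "T (sgn x) - c *\<^sub>R sgn x = inverse (norm x) *\<^sub>R (T x - c *\<^sub>R x)"
    using assms by (simp add: sgn_div_norm T_scaleR algebra_simps)
  then show ?thesis by (simp add: divide_inverse mult.commute)
qed

lemma unit_weakly_null_sgn:
  assumes "\<And>k. x k \<in> D" "weakly_null x" "0 < \<delta>" "\<And>k. \<delta> \<le> norm (x k)"
  shows "unit_weakly_null D (\<lambda>k. sgn (x k))"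
proof -
  have "x k \<noteq> 0" for k using assms(3) assms(4)[of k] by auto
  moreover have "sgn (x k) \<in> D" for k using assms(1) by (simp add: sgn_div_norm dom_scaleR)
  ultimately show ?thesis
    using weakly_null_sgn[OF assms(2-4)] by (simp add: unit_weakly_null_def norm_sgn)
qed

lemma ess_spectrum_if_approx_eigen:
  assumes x: "\<And>k. x k \<in> D" "weakly_null x"
    and "0 < \<delta>" "eventually (\<lambda>k. \<delta> \<le> norm (x k)) sequentially"
    and lim: "(\<lambda>k. norm (T (x k) - b *\<^sub>R x k)) \<longlonglongrightarrow> 0"
  shows "b \<in> ess_spectrum D T"
proof -
  obtain N where N: "\<And>k. N \<le> k \<Longrightarrow> \<delta> \<le> norm (x k)"
    using assms(4) unfolding eventually_sequentially by blast
  define y where "y k = x (k + N)" for k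
  have y: "y k \<in> D" "\<delta> \<le> norm (y k)" for k using x(1) N[of "k + N"] by (simp_all add: y_def)
  have "weakly_null y" unfolding y_def by (rule weakly_null_shift[OF x(2)])
  then have "unit_weakly_null D (\<lambda>k. sgn (y k))"
    using y \<open>0 < \<delta>\<close> by (intro unit_weakly_null_sgn[where x=y]) auto
  moreover have "(\<lambda>k. norm (T (sgn (y k)) - b *\<^sub>R sgn (y k))) \<longlonglongrightarrow> 0"
  proof (rule LIMSEQ_zero_if_norm_le[where K="1 / \<delta>"])
    show "(\<lambda>k. norm (T (y k) - b *\<^sub>R y k)) \<longlonglongrightarrow> 0"
      using LIMSEQ_ignore_initial_segment[OF lim, of N] by (simp add: y_def)
    fix k
    have "0 < norm (y k)" using y(2)[of k] \<open>0 < \<delta>\<close> by linarith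
    then have "norm (T (y k) - b *\<^sub>R y k) / norm (y k) \<le> norm (T (y k) - b *\<^sub>R y k) / \<delta>"
      using y(2)[of k] \<open>0 < \<delta>\<close> by (intro divide_left_mono) simp_all
    then show "norm (norm (T (sgn (y k)) - b *\<^sub>R sgn (y k)))
        \<le> 1 / \<delta> * norm (norm (T (y k) - b *\<^sub>R y k))"
      using norm_T_sgn_minus_scaleR[OF y(1)] by simp
  qed
  ultimately show ?thesis unfolding ess_spectrum_def by blast
qed

lemma orth_proj_in_dom: "(\<And>i. i < n \<Longrightarrow> e i \<in> D) \<Longrightarrow> orth_proj e n x \<in> D"
  unfolding orth_proj_def by (intro dom_sum dom_scaleR) auto

lemma T_orth_proj:
  "(\<And>i. i < n \<Longrightarrow> e i \<in> D) \<Longrightarrow> T (orth_proj e n x) = (\<Sum>i<n. inner x (e i) *\<^sub>R T (e i))"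
  unfolding orth_proj_def by (intro T_sum) auto

lemma norm_T_orth_proj_le:
  assumes "orthonormal_upto e n" "\<And>i. i < n \<Longrightarrow> e i \<in> D"
  shows "norm (T (orth_proj e n x)) \<le> (\<Sum>i<n. norm (T (e i))) * norm x"
proof -
  have Tp: "T (orth_proj e n x) = (\<Sum>i<n. inner x (e i) *\<^sub>R T (e i))"
    using assms(2) by (rule T_orth_proj)
  have "norm (T (orth_proj e n x)) \<le> (\<Sum>i<n. norm (inner x (e i) *\<^sub>R T (e i)))"
    unfolding Tp by (rule norm_sum)
  also have "\<dots> \<le> (\<Sum>i<n. norm x * norm (T (e i)))"
  proof (rule sum_mono)
    fix i assume "i \<in> {..<n}"
    then have "\<bar>inner x (e i)\<bar> \<le> norm x"
      using Cauchy_Schwarz_ineq2[of x "e i"] assms(1) by (simp add: orthonormal_upto_def)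
    then show "norm (inner x (e i) *\<^sub>R T (e i)) \<le> norm x * norm (T (e i))"
      by (simp add: mult_right_mono)
  qed
  finally show ?thesis by (simp add: sum_distrib_left mult.commute)
qed

text \<open>The finitely many directions \<open>e i\<close> contribute at most \<open>O(norm x\<^sup>2)\<close> to the form.\<close>

lemma form_bdd_above_if_bdd_above_on_orthocompl:
  assumes e: "orthonormal_upto e n" "\<And>i. i < n \<Longrightarrow> e i \<in> D"
    and bound: "\<And>w. w \<in> D \<Longrightarrow> \<forall>i<n. inner w (e i) = 0 \<Longrightarrow> inner (T w) w \<le> c * (norm w)\<^sup>2"
  shows "form_bdd_above D T"
  unfolding form_bdd_above_def
proof (intro exI ballI)
  define K where "K = (\<Sum>i<n. norm (T (e i)))"
  fix x assume x: "x \<in> D"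
  define p where "p = orth_proj e n x"
  define w where "w = x - p"
  have pD: "p \<in> D" and wD: "w \<in> D"
    using x e(2) orth_proj_in_dom by (auto simp: p_def w_def dom_diff)
  have w_perp: "\<forall>i<n. inner w (e i) = 0"
    using orth_proj_perp[OF e(1)] by (simp add: w_def p_def)
  have norm_p: "norm p \<le> real n * norm x"
    unfolding p_def by (rule norm_orth_proj_le[OF e(1)])
  have norm_w: "norm w \<le> (1 + real n) * norm x"
    using norm_triangle_ineq4[of x p] norm_p unfolding w_def by (simp add: algebra_simps)
  have norm_Tp: "norm (T p) \<le> K * norm x"
    unfolding p_def K_def by (rule norm_T_orth_proj_le[OF e])
  have "inner (T w) w \<le> \<bar>c\<bar> * ((1 + real n) * norm x)\<^sup>2"
    using bound[OF wD w_perp] norm_w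
    by (smt (verit) mult_left_mono mult_right_mono norm_ge_zero power_mono zero_le_power2 abs_ge_zero)
  moreover have "inner (T w) p \<le> ((1 + real n) * norm x) * (K * norm x)"
    using Cauchy_Schwarz_ineq2[of w "T p"] norm_w norm_Tp symmetric[OF wD pD]
    by (smt (verit) mult_mono norm_ge_zero)
  moreover have "inner (T p) p \<le> (K * norm x) * (real n * norm x)"
    using Cauchy_Schwarz_ineq2[of "T p" p] norm_p norm_Tp
    by (smt (verit) mult_mono norm_ge_zero)
  moreover have "inner (T x) x = inner (T w) w + 2 * inner (T w) p + inner (T p) p"
    using form_add[OF wD pD] by (simp add: w_def)
  ultimately have "inner (T x) x \<le> \<bar>c\<bar> * ((1 + real n) * norm x)\<^sup>2
      + 2 * (((1 + real n) * norm x) * (K * norm x)) + (K * norm x) * (real n * norm x)"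
    by linarith
  also have "\<dots> = (\<bar>c\<bar> * (1 + real n)\<^sup>2 + 2 * (1 + real n) * K + real n * K) * (norm x)\<^sup>2"
    by (simp add: power2_eq_square algebra_simps)
  finally show "inner (T x) x \<le> (\<bar>c\<bar> * (1 + real n)\<^sup>2 + 2 * (1 + real n) * K + real n * K) * (norm x)\<^sup>2" .
qed

lemma orthonormal_seq_if_not_form_bdd_above:
  assumes "\<not> form_bdd_above D T"
  obtains e where "orthonormal_seq e" "\<And>n. e n \<in> D" "\<And>n. real n \<le> inner (T (e n)) (e n)"
proof -
  have "\<exists>y. (y \<in> D \<and> real n \<le> inner (T y) y) \<and> norm y = 1 \<and> (\<forall>i<n. inner y (e i) = 0)"
    if e: "orthonormal_upto e n" "\<forall>i<n. e i \<in> D \<and> real i \<le> inner (T (e i)) (e i)" for n e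
  proof (rule ccontr)
    assume none: "\<not> ?thesis"
    have "inner (T w) w \<le> real n * (norm w)\<^sup>2"
      if w: "w \<in> D" "\<forall>i<n. inner w (e i) = 0" for w
    proof (cases "w = 0")
      case True then show ?thesis by (simp add: T_zero)
    next
      case False
      have "sgn w \<in> D" "norm (sgn w) = 1" "\<forall>i<n. inner (sgn w) (e i) = 0"
        using w False by (auto simp: sgn_div_norm dom_scaleR)
      then have "inner (T w) w / (norm w)\<^sup>2 < real n" using none form_sgn[OF w(1)] by auto
      then show ?thesis using False by (simp add: divide_less_eq)
    qed
    with e assms show False using form_bdd_above_if_bdd_above_on_orthocompl by blast
  qed
  then obtain e where "\<And>n. e n \<in> D \<and> real n \<le> inner (T (e n)) (e n)" "orthonormal_seq e"
    using orthonormal_seq_by_extension[where R = "\<lambda>n y. y \<in> D \<and> real n \<le> inner (T y) y"]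
    by blast
  then show ?thesis using that by blast
qed

lemma form_root_on_segment:
  assumes "x \<in> D" "y \<in> D" "inner (T x) x \<le> l * (norm x)\<^sup>2" "l * (norm y)\<^sup>2 \<le> inner (T y) y"
  obtains t where "0 \<le> t" "t \<le> 1"
    "inner (T ((1 - t) *\<^sub>R x + t *\<^sub>R y)) ((1 - t) *\<^sub>R x + t *\<^sub>R y)
       = l * (norm ((1 - t) *\<^sub>R x + t *\<^sub>R y))\<^sup>2"
proof -
  define f where "f t = inner ((1 - t) *\<^sub>R T x + t *\<^sub>R T y - l *\<^sub>R ((1 - t) *\<^sub>R x + t *\<^sub>R y))
      ((1 - t) *\<^sub>R x + t *\<^sub>R y)" for t
  have f_eq: "f t = inner (T ((1 - t) *\<^sub>R x + t *\<^sub>R y)) ((1 - t) *\<^sub>R x + t *\<^sub>R y)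
      - l * (norm ((1 - t) *\<^sub>R x + t *\<^sub>R y))\<^sup>2" for t
    using assms(1,2) by (simp add: f_def T_add T_scaleR dom_scaleR inner_diff_left dot_square_norm)
  have "\<exists>t. 0 \<le> t \<and> t \<le> 1 \<and> f t = 0"
  proof (rule IVT')
    show "f 0 \<le> 0" "0 \<le> f 1" using assms(3,4) by (simp_all add: f_eq)
    show "continuous_on {0..1} f" unfolding f_def
      by (rule bounded_bilinear.continuous_on[OF bounded_bilinear_inner]) (intro continuous_intros)+
  qed simp
  then show ?thesis using that f_eq by auto
qed

text \<open>Pair each \<open>xs k\<close> with a later \<open>ys (m k)\<close> that is almost orthogonal to it; on the segment
  between them the form takes the value \<open>l\<close> at a vector of norm at least \<open>1/2\<close>.\<close>

lemma ess_numrange_if_form_le_ge: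
  assumes xs: "unit_weakly_null D xs" "\<And>k. inner (T (xs k)) (xs k) \<le> l"
    and ys: "unit_weakly_null D ys" "\<And>k. l \<le> inner (T (ys k)) (ys k)"
  shows "l \<in> ess_numrange D T"
proof -
  have xs_D: "xs k \<in> D" "norm (xs k) = 1" and ys_D: "ys k \<in> D" "norm (ys k) = 1" for k
    using xs(1) ys(1) unfolding unit_weakly_null_def by auto
  obtain m where m: "\<And>k. k \<le> m k" "\<And>k. \<bar>inner (xs k) (ys (m k))\<bar> \<le> 1/8"
    using weakly_null_almost_orthogonal_reindex[of ys "1/8" xs] ys(1)
    by (auto simp: unit_weakly_null_def)
  have "\<exists>t. 0 \<le> t \<and> t \<le> 1 \<and> inner (T ((1 - t) *\<^sub>R xs k + t *\<^sub>R ys (m k))) ((1 - t) *\<^sub>R xs k + t *\<^sub>R ys (m k))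
      = l * (norm ((1 - t) *\<^sub>R xs k + t *\<^sub>R ys (m k)))\<^sup>2" for k
    by (rule form_root_on_segment[of "xs k" "ys (m k)" l]) (auto simp: xs_D ys_D xs(2) ys(2))
  then obtain t where t: "\<And>k. 0 \<le> t k" "\<And>k. t k \<le> 1" and
    root: "\<And>k. inner (T ((1 - t k) *\<^sub>R xs k + t k *\<^sub>R ys (m k))) ((1 - t k) *\<^sub>R xs k + t k *\<^sub>R ys (m k))
      = l * (norm ((1 - t k) *\<^sub>R xs k + t k *\<^sub>R ys (m k)))\<^sup>2" by metis
  define v where "v k = (1 - t k) *\<^sub>R xs k + t k *\<^sub>R ys (m k)" for k
  have v_D: "v k \<in> D" for k unfolding v_def using xs_D ys_D by (intro dom_add dom_scaleR)
  have v_ge: "1/2 \<le> norm (v k)" for k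
    unfolding v_def by (rule norm_convex_combination_ge[OF xs_D(2) ys_D(2) m(2) t])
  have "weakly_null v"
  proof -
    have "\<bar>1 - t k\<bar> \<le> 1" "\<bar>t k\<bar> \<le> 1" for k using t[of k] by auto
    then show ?thesis unfolding v_def using xs(1) ys(1) weakly_null_reindex[OF _ m(1)]
      by (intro weakly_null_add weakly_null_scaled) (auto simp: unit_weakly_null_def)
  qed
  then have "unit_weakly_null D (\<lambda>k. sgn (v k))"
    using v_D v_ge by (intro unit_weakly_null_sgn[of v "1/2"]) auto
  moreover have "inner (T (sgn (v k))) (sgn (v k)) = l" for k
  proof -
    have "v k \<noteq> 0" using v_ge[of k] by auto
    then show ?thesis using form_sgn[OF v_D] root[of k, folded v_def] by simp
  qed
  ultimately show ?thesis unfolding ess_numrange_def by auto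
qed

lemma ess_numrange_uminus: "l \<in> ess_numrange D (\<lambda>x. - T x) \<longleftrightarrow> - l \<in> ess_numrange D T"
proof -
  have "(\<lambda>k. inner (- T (xs k)) (xs k)) \<longlonglongrightarrow> l \<longleftrightarrow> (\<lambda>k. inner (T (xs k)) (xs k)) \<longlonglongrightarrow> - l" for xs
    using tendsto_minus_cancel_left[of "\<lambda>k. inner (T (xs k)) (xs k)" l sequentially] by simp
  then show ?thesis unfolding ess_numrange_def by simp
qed

lemma ess_spectrum_uminus: "l \<in> ess_spectrum D (\<lambda>x. - T x) \<longleftrightarrow> - l \<in> ess_spectrum D T"
proof -
  have "norm (- T x - l *\<^sub>R x) = norm (T x - (- l) *\<^sub>R x)" for x
    using norm_minus_cancel[of "T x - (- l) *\<^sub>R x"] by (simp add: algebra_simps)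
  then show ?thesis unfolding ess_spectrum_def by simp
qed

lemma form_bdd_above_uminus: "form_bdd_above D (\<lambda>x. - T x) \<longleftrightarrow> form_bdd_below D T"
proof -
  have "(\<forall>x\<in>D. inner (- T x) x \<le> C * (norm x)\<^sup>2) \<longleftrightarrow> (\<forall>x\<in>D. - C * (norm x)\<^sup>2 \<le> inner (T x) x)" for C
    by auto
  then show ?thesis unfolding form_bdd_above_def form_bdd_below_def by (metis minus_minus)
qed

lemma unit_weakly_null_form_ge:
  assumes "(\<exists>b\<in>ess_spectrum D T. l < b) \<or> \<not> form_bdd_above D T"
  obtains xs where "unit_weakly_null D xs" "\<And>k. l \<le> inner (T (xs k)) (xs k)"
  using assms
proof
  assume "\<exists>b\<in>ess_spectrum D T. l < b"
  then obtain b xs where b: "l < b" and xs: "unit_weakly_null D xs"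
    "(\<lambda>k. inner (T (xs k)) (xs k)) \<longlonglongrightarrow> b"
    using ess_spectrum_subset_ess_numrange unfolding ess_numrange_def by blast
  have "eventually (\<lambda>k. l \<le> inner (T (xs k)) (xs k)) sequentially"
    using order_tendstoD(1)[OF xs(2) b] by (rule eventually_mono) simp
  with xs(1) show ?thesis using that by (rule unit_weakly_null_eventually)
next
  assume "\<not> form_bdd_above D T"
  then obtain e where e: "orthonormal_seq e" "\<And>n. e n \<in> D" "\<And>n. real n \<le> inner (T (e n)) (e n)"
    by (rule orthonormal_seq_if_not_form_bdd_above) (rule that)
  have "eventually (\<lambda>n. l \<le> inner (T (e n)) (e n)) sequentially"
    unfolding eventually_sequentially using e(3) by (metis of_nat_ceiling of_nat_le_iff order_trans)
  with orthonormal_seq_unit_weakly_null[OF e(1,2)] show ?thesis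
    using that by (rule unit_weakly_null_eventually)
qed

lemma unit_weakly_null_form_le:
  assumes "(\<exists>a\<in>ess_spectrum D T. a < l) \<or> \<not> form_bdd_below D T"
  obtains xs where "unit_weakly_null D xs" "\<And>k. inner (T (xs k)) (xs k) \<le> l"
proof -
  interpret N: symmetric_operator D "\<lambda>x. - T x" by (rule symmetric_operator_uminus)
  have "(\<exists>b\<in>ess_spectrum D (\<lambda>x. - T x). - l < b) \<or> \<not> form_bdd_above D (\<lambda>x. - T x)"
    using assms by (auto simp: ess_spectrum_uminus form_bdd_above_uminus intro: bexI[of _ "- _"])
  then obtain xs where "unit_weakly_null D xs" "\<And>k. - l \<le> inner (- T (xs k)) (xs k)"
    by (rule N.unit_weakly_null_form_ge) (rule that)
  then show ?thesis using that by simp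
qed

end

section \<open>Bounded symmetric operators: the top of the essential numerical range\<close>

locale bounded_symmetric_operator = symmetric_operator UNIV B for B :: "'a::real_inner \<Rightarrow> 'a" +
  fixes K :: real
  assumes norm_bound: "norm (B x) \<le> K * norm x"
    and bound_nonneg: "0 \<le> K"
begin

lemma abs_form_le: "\<bar>inner (B x) x\<bar> \<le> K * (norm x)\<^sup>2"
proof -
  have "\<bar>inner (B x) x\<bar> \<le> norm (B x) * norm x" by (rule Cauchy_Schwarz_ineq2)
  also have "\<dots> \<le> K * norm x * norm x" using norm_bound by (intro mult_right_mono) auto
  finally show ?thesis by (simp add: power2_eq_square mult.assoc)
qed

lemma abs_form_diff_le: "\<bar>inner (B x) x - inner (B y) y\<bar> \<le> K * (norm x + norm y) * norm (x - y)"
proof -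
  have "\<bar>inner (B x) (x - y)\<bar> \<le> norm (B x) * norm (x - y)" by (rule Cauchy_Schwarz_ineq2)
  also have "\<dots> \<le> K * norm x * norm (x - y)" using norm_bound by (intro mult_right_mono) auto
  finally have 1: "\<bar>inner (B x) (x - y)\<bar> \<le> K * norm x * norm (x - y)" .
  have "\<bar>inner (B (x - y)) y\<bar> \<le> norm (B (x - y)) * norm y" by (rule Cauchy_Schwarz_ineq2)
  also have "\<dots> \<le> K * norm (x - y) * norm y" using norm_bound by (intro mult_right_mono) auto
  finally have 2: "\<bar>inner (B (x - y)) y\<bar> \<le> K * norm (x - y) * norm y" .
  have "inner (B x) x - inner (B y) y = inner (B x) (x - y) + inner (B (x - y)) y"
    by (simp add: T_diff inner_diff_left inner_diff_right)
  with 1 2 show ?thesis by (simp add: algebra_simps)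
qed

lemma ess_numrange_le: "v \<in> ess_numrange UNIV B \<Longrightarrow> v \<le> K"
  by (rule ess_numrange_le_form_bound) (use abs_form_le in \<open>auto simp: abs_le_iff\<close>)

lemma bdd_above_ess_numrange: "bdd_above (ess_numrange UNIV B)"
  using ess_numrange_le by (intro bdd_aboveI) auto

text \<open>If \<open>c\<close> exceeds every point of the essential numerical range, then \<open>B \<le> c\<close> on the
  orthogonal complement of a finite orthonormal family, which may be taken to extend any given one:
  otherwise a recursion would produce an orthonormal, hence weakly null, sequence with form values
  at least \<open>c\<close>.\<close>

lemma form_le_on_orthocompl:
  assumes c: "\<And>v. v \<in> ess_numrange UNIV B \<Longrightarrow> v < c" and E: "orthonormal_upto E n\<^sub>0"
  obtains n F where "n\<^sub>0 \<le> n" "orthonormal_upto F n" "\<And>i. i < n\<^sub>0 \<Longrightarrow> F i = E i"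
    "\<And>w. \<forall>i<n. inner w (F i) = 0 \<Longrightarrow> inner (B w) w \<le> c * (norm w)\<^sup>2"
proof (rule ccontr)
  note found = that
  assume none: "\<not> thesis"
  let ?R = "\<lambda>i y. (i < n\<^sub>0 \<longrightarrow> y = E i) \<and> (n\<^sub>0 \<le> i \<longrightarrow> c \<le> inner (B y) y)"
  have step: "\<exists>y. ?R n y \<and> norm y = 1 \<and> (\<forall>i<n. inner y (e i) = 0)"
    if e: "orthonormal_upto e n" "\<forall>i<n. ?R i (e i)" for n e
  proof (cases "n < n\<^sub>0")
    case True
    have "inner (E n) (e i) = 0" if "i < n" for i
      using e(2) that True orthonormal_upto_inner[OF E, of n i] by auto
    moreover have "norm (E n) = 1" using E True unfolding orthonormal_upto_def by blast
    ultimately show ?thesis using True by auto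
  next
    case False
    then obtain w where w: "\<forall>i<n. inner w (e i) = 0" "c * (norm w)\<^sup>2 < inner (B w) w"
      using none found[of n e] e by (force simp: not_le)
    then have "w \<noteq> 0" by (auto simp: T_zero)
    then have "c \<le> inner (B (sgn w)) (sgn w)"
      using w(2) form_sgn[of w] by (simp add: pos_le_divide_eq less_imp_le)
    moreover have "norm (sgn w) = 1" using \<open>w \<noteq> 0\<close> by (simp add: norm_sgn)
    moreover have "\<forall>i<n. inner (sgn w) (e i) = 0" using w(1) by (simp add: sgn_div_norm)
    ultimately show ?thesis using False by auto
  qed
  then obtain g where g: "\<And>n. ?R n (g n)" "orthonormal_seq g"
    using orthonormal_seq_by_extension[where R = ?R, OF step] by blast
  have h: "unit_weakly_null UNIV (\<lambda>k. g (k + n\<^sub>0))"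
    using orthonormal_seq_shift[OF g(2)] by (rule orthonormal_seq_unit_weakly_null) simp
  moreover have "c \<le> inner (B (g (k + n\<^sub>0))) (g (k + n\<^sub>0))" for k using g(1)[of "k + n\<^sub>0"] by simp
  moreover have "inner (B (g (k + n\<^sub>0))) (g (k + n\<^sub>0)) \<le> K" for k
    using abs_form_le[of "g (k + n\<^sub>0)"] g(2) by (simp add: orthonormal_seq_def abs_le_iff)
  ultimately obtain v where "v \<in> ess_numrange UNIV B" "c \<le> v"
    by (rule ess_numrange_between)
  then show False using c by fastforce
qed

text \<open>On the orthogonal complement of \<open>F\<close> the form of \<open>c - B\<close> is nonnegative, so by
  Cauchy--Schwarz \<open>(c - B) u\<close> is controlled by its form value, up to the component along \<open>F\<close>.\<close>

lemma norm_minus_scaleR_le_on_orthocompl: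
  assumes F: "orthonormal_upto F n"
    and le: "\<And>w. \<forall>i<n. inner w (F i) = 0 \<Longrightarrow> inner (B w) w \<le> c * (norm w)\<^sup>2"
    and u: "\<forall>i<n. inner u (F i) = 0"
  shows "norm (B u - c *\<^sub>R u)
    \<le> sqrt ((\<bar>c\<bar> + K) * (c * (norm u)\<^sup>2 - inner (B u) u)) + norm (orth_proj F n (B u))"
proof -
  interpret S: symmetric_operator UNIV "\<lambda>x. c *\<^sub>R x + (-1) *\<^sub>R B x"
    by (rule symmetric_operator_affine)
  have S_form: "inner (c *\<^sub>R x + (-1) *\<^sub>R B x) y = c * inner x y - inner (B x) y" for x y
    by (simp add: inner_diff_left)
  define N where "N = c *\<^sub>R u - (B u - orth_proj F n (B u))"
  have N_perp: "\<forall>i<n. inner N (F i) = 0"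
    using u orth_proj_perp[OF F, of _ "B u"] by (simp add: N_def inner_diff_left)
  have "0 \<le> c * inner (u + t *\<^sub>R N) (u + t *\<^sub>R N) - inner (B (u + t *\<^sub>R N)) (u + t *\<^sub>R N)" for t
    using le[of "u + t *\<^sub>R N"] u N_perp by (simp add: inner_add_left dot_square_norm)
  then have "(inner (c *\<^sub>R u + (-1) *\<^sub>R B u) N)\<^sup>2
      \<le> inner (c *\<^sub>R u + (-1) *\<^sub>R B u) u * inner (c *\<^sub>R N + (-1) *\<^sub>R B N) N"
    by (intro S.form_cauchy_schwarz) (simp_all only: S_form UNIV_I)
  moreover have "inner (c *\<^sub>R u + (-1) *\<^sub>R B u) N = (norm N)\<^sup>2"
  proof -
    have "c *\<^sub>R u + (-1) *\<^sub>R B u = N - orth_proj F n (B u)" by (simp add: N_def)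
    then show ?thesis by (simp add: inner_diff_left inner_orth_proj_perp[OF N_perp] dot_square_norm)
  qed
  moreover have "inner (c *\<^sub>R N + (-1) *\<^sub>R B N) N \<le> (\<bar>c\<bar> + K) * (norm N)\<^sup>2"
    using abs_form_le[of N] abs_ge_self[of c]
    by (simp add: S_form dot_square_norm algebra_simps) (smt (verit) mult_right_mono zero_le_power2)
  moreover have s_uu: "0 \<le> inner (c *\<^sub>R u + (-1) *\<^sub>R B u) u"
    using le[OF u] by (simp add: inner_diff_left dot_square_norm)
  ultimately have "((norm N)\<^sup>2)\<^sup>2 \<le> ((\<bar>c\<bar> + K) * inner (c *\<^sub>R u + (-1) *\<^sub>R B u) u) * (norm N)\<^sup>2"
    by (smt (verit) mult_left_mono mult.commute mult.left_commute)
  then have "(norm N)\<^sup>2 \<le> (\<bar>c\<bar> + K) * inner (c *\<^sub>R u + (-1) *\<^sub>R B u) u"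
    using s_uu bound_nonneg by (cases "N = 0") (auto simp: power2_eq_square mult_le_cancel_right)
  then have "norm N \<le> sqrt ((\<bar>c\<bar> + K) * (c * (norm u)\<^sup>2 - inner (B u) u))"
    by (intro real_le_rsqrt) (simp add: inner_diff_left dot_square_norm)
  moreover have "B u - c *\<^sub>R u = orth_proj F n (B u) - N" by (simp add: N_def)
  ultimately show ?thesis
    using norm_triangle_ineq4[of "orth_proj F n (B u)" N] by simp
qed

lemma orthocompl_approximating_seq:
  assumes xs: "unit_weakly_null UNIV xs" "(\<lambda>k. inner (B (xs k)) (xs k)) \<longlonglongrightarrow> \<rho>"
    and F: "orthonormal_upto F n"
  obtains w where "\<And>k. \<forall>i<n. inner (w k) (F i) = 0" "(\<lambda>k. norm (w k)) \<longlonglongrightarrow> 1"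
    "(\<lambda>k. inner (B (w k)) (w k)) \<longlonglongrightarrow> \<rho>" "(\<lambda>k. orth_proj F n (B (w k))) \<longlonglongrightarrow> 0"
proof -
  have unit: "norm (xs k) = 1" for k using xs(1) unfolding unit_weakly_null_def by blast
  define p where "p k = orth_proj F n (xs k)" for k
  define w where "w k = xs k - p k" for k
  have p_lim: "p \<longlonglongrightarrow> 0"
    unfolding p_def using xs(1) by (intro orth_proj_LIMSEQ_zero) (auto simp: unit_weakly_null_def weakly_null_def)
  have w_perp: "\<forall>i<n. inner (w k) (F i) = 0" for k
    unfolding w_def p_def using orth_proj_perp[OF F] by blast
  have norm_w: "(\<lambda>k. norm (w k)) \<longlonglongrightarrow> 1"
  proof -
    have "norm (norm (w k) - 1) \<le> 1 * norm (p k)" for k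
      using norm_triangle_ineq3[of "w k" "xs k"] unit[of k] by (simp add: w_def)
    then have "(\<lambda>k. norm (w k) - 1) \<longlonglongrightarrow> 0" by (rule LIMSEQ_zero_if_norm_le[OF p_lim])
    then show ?thesis by (simp add: LIM_zero_iff)
  qed
  have "(\<lambda>k. inner (B (w k)) (w k)) \<longlonglongrightarrow> \<rho>"
  proof -
    have "(\<lambda>k. (norm (w k) + 1) * norm (p k)) \<longlonglongrightarrow> 0"
      using tendsto_mult[OF tendsto_add[OF norm_w tendsto_const] tendsto_norm_zero[OF p_lim]] by simp
    moreover have "norm (inner (B (w k)) (w k) - inner (B (xs k)) (xs k))
        \<le> K * norm ((norm (w k) + 1) * norm (p k))" for k
    proof -
      have "w k - xs k = - p k" by (simp add: w_def)
      then have "\<bar>inner (B (w k)) (w k) - inner (B (xs k)) (xs k)\<bar> \<le> K * (norm (w k) + 1) * norm (p k)"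
        using abs_form_diff_le[of "w k" "xs k"] unit[of k] by simp
      moreover have "0 \<le> (norm (w k) + 1) * norm (p k)" by simp
      ultimately show ?thesis unfolding real_norm_def by (simp only: abs_of_nonneg mult.assoc)
    qed
    ultimately have "(\<lambda>k. inner (B (w k)) (w k) - inner (B (xs k)) (xs k)) \<longlonglongrightarrow> 0"
      by (rule LIMSEQ_zero_if_norm_le)
    then show ?thesis by (rule Lim_transform[OF xs(2)])
  qed
  moreover have "(\<lambda>k. orth_proj F n (B (w k))) \<longlonglongrightarrow> 0"
  proof -
    have "weakly_null w"
      unfolding w_def using xs(1) LIMSEQ_zero_imp_weakly_null[OF p_lim]
      by (intro weakly_null_diff) (auto simp: unit_weakly_null_def)
    then show ?thesis by (intro orth_proj_LIMSEQ_zero) (simp add: weakly_null_def symmetric)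
  qed
  ultimately show ?thesis using that w_perp norm_w by blast
qed

lemma approx_eigenvector_orthocompl:
  assumes ne: "ess_numrange UNIV B \<noteq> {}" and E: "orthonormal_upto E n\<^sub>0" and "0 < \<delta>"
  obtains z where "norm z = 1" "\<forall>i<n\<^sub>0. inner z (E i) = 0"
    "norm (B z - Sup (ess_numrange UNIV B) *\<^sub>R z) < \<delta>"
proof -
  define m where "m = Sup (ess_numrange UNIV B)"
  define K' where "K' = \<bar>m\<bar> + 1 + K"
  obtain \<epsilon> where \<epsilon>: "0 < \<epsilon>" "\<epsilon> \<le> 1" "2 * (\<epsilon> + sqrt (2 * \<epsilon> * K')) < \<delta>"
    using small_error_bound[OF \<open>0 < \<delta>\<close>] by blast
  have le_m: "v \<le> m" if "v \<in> ess_numrange UNIV B" for v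
    unfolding m_def using that bdd_above_ess_numrange by (rule cSup_upper)
  then have c_gt: "v < m + \<epsilon>" if "v \<in> ess_numrange UNIV B" for v using that \<epsilon>(1) by fastforce
  obtain n F where F: "n\<^sub>0 \<le> n" "orthonormal_upto F n" "\<And>i. i < n\<^sub>0 \<Longrightarrow> F i = E i"
    and F_le: "\<And>w. \<forall>i<n. inner w (F i) = 0 \<Longrightarrow> inner (B w) w \<le> (m + \<epsilon>) * (norm w)\<^sup>2"
    by (rule form_le_on_orthocompl[OF c_gt E]) (assumption, rule that)
  obtain \<rho> where \<rho>: "\<rho> \<in> ess_numrange UNIV B" "m - \<epsilon> < \<rho>"
    using less_cSup_iff[OF ne bdd_above_ess_numrange, of "m - \<epsilon>"] \<epsilon>(1) by (auto simp: m_def)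
  then obtain xs where xs: "unit_weakly_null UNIV xs" "(\<lambda>k. inner (B (xs k)) (xs k)) \<longlonglongrightarrow> \<rho>"
    unfolding ess_numrange_def by blast
  obtain w where w_perp: "\<And>k. \<forall>i<n. inner (w k) (F i) = 0" and w: "(\<lambda>k. norm (w k)) \<longlonglongrightarrow> 1"
    "(\<lambda>k. inner (B (w k)) (w k)) \<longlonglongrightarrow> \<rho>" "(\<lambda>k. orth_proj F n (B (w k))) \<longlonglongrightarrow> 0"
    using orthocompl_approximating_seq[OF xs F(2)] by blast
  text \<open>By \<open>norm_minus_scaleR_le_on_orthocompl\<close>, \<open>r k\<close> bounds \<open>norm (B (w k) - m *\<^sub>R w k)\<close>.\<close>
  define r where
    "r k = sqrt ((\<bar>m + \<epsilon>\<bar> + K) * ((m + \<epsilon>) * (norm (w k))\<^sup>2 - inner (B (w k)) (w k)))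
      + norm (orth_proj F n (B (w k))) + \<epsilon> * norm (w k)" for k
  have "r \<longlonglongrightarrow> sqrt ((\<bar>m + \<epsilon>\<bar> + K) * ((m + \<epsilon>) * 1\<^sup>2 - \<rho>)) + norm (0::'a) + \<epsilon> * 1"
    unfolding r_def using w by (intro tendsto_intros)
  moreover have "sqrt ((\<bar>m + \<epsilon>\<bar> + K) * ((m + \<epsilon>) * 1\<^sup>2 - \<rho>)) < sqrt (2 * \<epsilon> * K')"
  proof -
    have "(\<bar>m + \<epsilon>\<bar> + K) * (m + \<epsilon> - \<rho>) \<le> K' * (m + \<epsilon> - \<rho>)"
      using \<epsilon>(1,2) le_m[OF \<rho>(1)] by (intro mult_right_mono) (auto simp: K'_def)
    also have "\<dots> < K' * (2 * \<epsilon>)"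
      using \<rho>(2) bound_nonneg by (intro mult_strict_left_mono) (auto simp: K'_def)
    finally show ?thesis by (simp add: mult.commute mult.left_commute)
  qed
  ultimately have "eventually (\<lambda>k. r k < \<epsilon> + sqrt (2 * \<epsilon> * K') \<and> 1/2 < norm (w k)) sequentially"
    using w(1) by (intro eventually_conj order_tendstoD) auto
  then obtain k where k: "r k < \<epsilon> + sqrt (2 * \<epsilon> * K')" "1/2 < norm (w k)"
    by (auto simp: eventually_sequentially)
  have "norm (B (w k) - m *\<^sub>R w k) \<le> norm (B (w k) - (m + \<epsilon>) *\<^sub>R w k) + norm (\<epsilon> *\<^sub>R w k)"
    using norm_triangle_ineq[of "B (w k) - (m + \<epsilon>) *\<^sub>R w k" "\<epsilon> *\<^sub>R w k"] by (simp add: algebra_simps)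
  then have "norm (B (w k) - m *\<^sub>R w k) \<le> r k"
    using norm_minus_scaleR_le_on_orthocompl[OF F(2) F_le w_perp[of k]] \<epsilon>(1) unfolding r_def by simp
  then have "norm (B (w k) - m *\<^sub>R w k) / norm (w k) \<le> r k / (1/2)"
    using k(2) norm_ge_zero[of "B (w k) - m *\<^sub>R w k"] by (intro frac_le) linarith+
  then have "norm (B (sgn (w k)) - m *\<^sub>R sgn (w k)) < \<delta>"
    using k(1) \<epsilon>(3) norm_T_sgn_minus_scaleR[of "w k" m] by simp
  moreover have "inner (sgn (w k)) (E i) = 0" if "i < n\<^sub>0" for i
  proof -
    have "inner (w k) (F i) = 0" using w_perp[of k] F(1) that by simp
    then show ?thesis using F(3)[OF that] by (simp add: sgn_div_norm)
  qed
  moreover have "norm (sgn (w k)) = 1" using k(2) by (auto simp: norm_sgn)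
  ultimately show ?thesis using that by (auto simp: m_def)
qed

theorem Sup_ess_numrange_in_ess_spectrum:
  assumes "ess_numrange UNIV B \<noteq> {}"
  shows "Sup (ess_numrange UNIV B) \<in> ess_spectrum UNIV B"
proof -
  define m where "m = Sup (ess_numrange UNIV B)"
  have "\<exists>z. norm (B z - m *\<^sub>R z) < 1 / real (Suc n) \<and> norm z = 1 \<and> (\<forall>i<n. inner z (E i) = 0)"
    if "orthonormal_upto E n" for n E
    using approx_eigenvector_orthocompl[OF assms that, of "1 / real (Suc n)"] by (auto simp: m_def)
  then obtain g where g: "\<And>n. norm (B (g n) - m *\<^sub>R g n) < 1 / real (Suc n)" "orthonormal_seq g"
    using orthonormal_seq_by_extension[where R = "\<lambda>n z. norm (B z - m *\<^sub>R z) < 1 / real (Suc n)"]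
    by blast
  have "(\<lambda>n. norm (B (g n) - m *\<^sub>R g n)) \<longlonglongrightarrow> 0"
    using g(1) by (intro LIMSEQ_norm_0) simp
  moreover have "unit_weakly_null UNIV g" using g(2) by (rule orthonormal_seq_unit_weakly_null) simp
  ultimately show ?thesis unfolding ess_spectrum_def m_def by blast
qed

end

section \<open>Selfadjoint operators\<close>

lemma nearest_point_in_subspace:
  fixes V :: "'a::{real_inner, complete_space} set"
  assumes V: "subspace V" "closed V"
  obtains v where "v \<in> V" "\<And>w. w \<in> V \<Longrightarrow> norm (y - v) \<le> norm (y - w)"
proof -
  define d where "d = Inf ((\<lambda>v. norm (y - v)) ` V)"
  have bdd: "bdd_below ((\<lambda>v. norm (y - v)) ` V)" by (intro bdd_belowI[where m=0]) auto
  have ne: "(\<lambda>v. norm (y - v)) ` V \<noteq> {}" using subspace_0[OF V(1)] by blast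
  have d_le: "d \<le> norm (y - w)" if "w \<in> V" for w
    unfolding d_def using that bdd by (auto intro: cInf_lower)
  have d_nonneg: "0 \<le> d" unfolding d_def using ne by (auto intro: cInf_greatest)
  define e where "e n = inverse (real (Suc n))" for n
  have e_pos: "0 < e n" and e_mono: "n \<le> n' \<Longrightarrow> e n' \<le> e n" for n n'
    by (simp_all add: e_def le_imp_inverse_le)
  have e_lim: "e \<longlonglongrightarrow> 0" unfolding e_def by (rule LIMSEQ_inverse_real_of_nat)
  have "\<exists>v\<in>V. norm (y - v) < d + e n" for n
    using cInf_less_iff[OF ne bdd, of "d + e n"] e_pos[of n] by (auto simp: d_def)
  then obtain X where X: "\<And>n. X n \<in> V" "\<And>n. norm (y - X n) < d + e n" by metis
  text \<open>Parallelogram law, with the midpoint of \<open>X n\<close> and \<open>X n'\<close> lying in \<open>V\<close>.\<close>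
  have X_close: "(norm (X n' - X n))\<^sup>2 \<le> 8 * d * e N + 4 * (e N)\<^sup>2" if "N \<le> n" "N \<le> n'" for n n' N
  proof -
    have "(1/2) *\<^sub>R (X n + X n') \<in> V" using X(1) V(1) by (intro subspace_scale subspace_add)
    then have "2 * d \<le> norm ((y - X n) + (y - X n'))"
      using d_le[of "(1/2) *\<^sub>R (X n + X n')"] norm_scaleR[of 2 "y - (1/2) *\<^sub>R (X n + X n')"]
      by (simp add: algebra_simps scaleR_2)
    then have "(2 * d)\<^sup>2 \<le> (norm ((y - X n) + (y - X n')))\<^sup>2" using d_nonneg by (intro power_mono) auto
    moreover have "(norm (y - X n))\<^sup>2 \<le> (d + e N)\<^sup>2" "(norm (y - X n'))\<^sup>2 \<le> (d + e N)\<^sup>2"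
      using X(2)[of n] X(2)[of n'] e_mono[OF that(1)] e_mono[OF that(2)] by (auto intro!: power_mono)
    moreover have "(norm (X n' - X n))\<^sup>2 + (norm ((y - X n) + (y - X n')))\<^sup>2
        = 2 * (norm (y - X n))\<^sup>2 + 2 * (norm (y - X n'))\<^sup>2"
      by (simp add: dot_square_norm[symmetric] inner_add_left inner_add_right inner_diff_left
          inner_diff_right inner_commute)
    ultimately show ?thesis by (simp add: power2_eq_square algebra_simps)
  qed
  have "Cauchy X"
  proof (rule CauchyI)
    fix \<epsilon> :: real assume "0 < \<epsilon>"
    have "(\<lambda>N. 8 * d * e N + 4 * (e N)\<^sup>2) \<longlonglongrightarrow> 8 * d * 0 + 4 * 0\<^sup>2"
      by (intro tendsto_intros e_lim)
    then have "eventually (\<lambda>N. 8 * d * e N + 4 * (e N)\<^sup>2 < \<epsilon>\<^sup>2) sequentially"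
      using \<open>0 < \<epsilon>\<close> by (intro order_tendstoD(2)) auto
    then obtain N where N: "8 * d * e N + 4 * (e N)\<^sup>2 < \<epsilon>\<^sup>2"
      by (auto simp: eventually_sequentially)
    have "norm (X n' - X n) < \<epsilon>" if "N \<le> n'" "N \<le> n" for n n'
    proof (rule power_less_imp_less_base)
      show "(norm (X n' - X n))\<^sup>2 < \<epsilon>\<^sup>2" using X_close[OF that(2,1)] N by linarith
    qed (use \<open>0 < \<epsilon>\<close> in simp)
    then show "\<exists>M. \<forall>m\<ge>M. \<forall>n\<ge>M. norm (X m - X n) < \<epsilon>" by blast
  qed
  then obtain v where v: "X \<longlonglongrightarrow> v" by (auto simp: Cauchy_convergent_iff convergent_def)
  have "v \<in> V" using closed_sequentially[OF V(2) X(1) v] .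
  moreover have "norm (y - v) \<le> d"
  proof (rule tendsto_le[OF _ _ _ always_eventually])
    show "(\<lambda>n. d + e n) \<longlonglongrightarrow> d" using tendsto_add[OF tendsto_const e_lim] by simp
    show "(\<lambda>n. norm (y - X n)) \<longlonglongrightarrow> norm (y - v)" using v by (intro tendsto_intros)
    show "\<forall>n. norm (y - X n) \<le> d + e n" using X(2) less_imp_le by blast
  qed simp
  ultimately show ?thesis using that d_le by force
qed

lemma orthogonal_projection_exists:
  fixes V :: "'a::{real_inner, complete_space} set"
  assumes V: "subspace V" "closed V"
  obtains v where "v \<in> V" "\<And>w. w \<in> V \<Longrightarrow> inner (y - v) w = 0"
proof -
  obtain v where v: "v \<in> V" "\<And>w. w \<in> V \<Longrightarrow> norm (y - v) \<le> norm (y - w)"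
    using nearest_point_in_subspace[OF V] by blast
  have "inner (y - v) w = 0" if w: "w \<in> V" for w
  proof -
    have "(- inner (y - v) w)\<^sup>2 \<le> 0 * (norm w)\<^sup>2"
    proof (rule nonneg_quadratic_discriminant)
      fix t
      have "v + t *\<^sub>R w \<in> V" using v(1) w V(1) by (intro subspace_add subspace_scale)
      then have "(norm (y - v))\<^sup>2 \<le> (norm ((y - v) - t *\<^sub>R w))\<^sup>2"
        using v(2)[of "v + t *\<^sub>R w"] by (simp add: power_mono algebra_simps)
      also have "\<dots> = (norm (y - v))\<^sup>2 - 2 * t * inner (y - v) w + t\<^sup>2 * (norm w)\<^sup>2"
        unfolding power2_norm_eq_inner
        by (simp add: inner_diff_left inner_diff_right inner_commute power2_eq_square algebra_simps)
      finally show "0 \<le> 0 + 2 * (- inner (y - v) w) * t + (norm w)\<^sup>2 * t\<^sup>2" by (simp add: algebra_simps)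
    qed
    then show ?thesis by simp
  qed
  with v(1) show ?thesis using that by blast
qed

locale selfadjoint_operator = symmetric_operator D T
  for D :: "'a::{real_inner, complete_space} set" and T +
  assumes dense_dom: "\<And>x e. 0 < e \<Longrightarrow> \<exists>d\<in>D. norm (x - d) < e"
    and adjoint_dom: "\<And>y z. \<forall>x\<in>D. inner (T x) y = inner x z \<Longrightarrow> y \<in> D"
begin

lemma orthogonal_dom_eq_zero:
  assumes "\<forall>x\<in>D. inner x v = 0"
  shows "v = 0"
proof (rule ccontr)
  assume "v \<noteq> 0"
  then obtain d where d: "d \<in> D" "norm (v - d) < norm v"
    using dense_dom[of "norm v" v] by auto
  have "(norm v)\<^sup>2 = inner (v - d) v" using assms d(1) by (simp add: inner_diff_left dot_square_norm)
  also have "\<dots> \<le> norm (v - d) * norm v" by (rule abs_le_D1[OF Cauchy_Schwarz_ineq2])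
  also have "\<dots> < norm v * norm v" using d(2) \<open>v \<noteq> 0\<close> by simp
  finally show False by (simp add: power2_eq_square)
qed

lemma adjoint_eq:
  assumes "\<forall>x\<in>D. inner (T x) y = inner x z"
  shows "y \<in> D" "T y = z"
proof -
  show y: "y \<in> D" using adjoint_dom[OF assms] .
  have "\<forall>x\<in>D. inner x (T y - z) = 0"
    using assms symmetric[OF _ y] by (simp add: inner_diff_right)
  then have "T y - z = 0" by (rule orthogonal_dom_eq_zero)
  then show "T y = z" by simp
qed

lemma selfadjoint_operator_uminus: "selfadjoint_operator D (\<lambda>x. - T x)"
proof -
  interpret N: symmetric_operator D "\<lambda>x. - T x" by (rule symmetric_operator_uminus)
  show ?thesis
  proof unfold_locales
    show "\<exists>d\<in>D. norm (x - d) < e" if "0 < e" for x e using dense_dom[OF that] .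
    show "y \<in> D" if "\<forall>x\<in>D. inner (- T x) y = inner x z" for y z
    proof (rule adjoint_dom[of y "- z"], intro ballI)
      fix x assume "x \<in> D"
      then have "- inner (T x) y = inner x z" using that by simp
      then show "inner (T x) y = inner x (- z)" by simp
    qed
  qed
qed

end

locale selfadjoint_shifted = selfadjoint_operator D T
  for D :: "'a::{real_inner, complete_space} set" and T +
  fixes \<mu> :: real
  assumes form_le: "\<And>x. x \<in> D \<Longrightarrow> inner (T x) x \<le> (\<mu> - 1) * (norm x)\<^sup>2"
begin

lemma shifted_form_ge: "x \<in> D \<Longrightarrow> (norm x)\<^sup>2 \<le> inner (\<mu> *\<^sub>R x - T x) x"
  using form_le by (simp add: inner_diff_left dot_square_norm algebra_simps)

lemma norm_le_shifted: "x \<in> D \<Longrightarrow> norm x \<le> norm (\<mu> *\<^sub>R x - T x)"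
proof (cases "x = 0")
  case False
  assume x: "x \<in> D"
  have "norm x * norm x \<le> inner (\<mu> *\<^sub>R x - T x) x" using shifted_form_ge[OF x] by (simp add: power2_eq_square)
  also have "\<dots> \<le> norm (\<mu> *\<^sub>R x - T x) * norm x" by (rule abs_le_D1[OF Cauchy_Schwarz_ineq2])
  finally show ?thesis using False by simp
qed simp

lemma shifted_diff: "x \<in> D \<Longrightarrow> y \<in> D \<Longrightarrow> \<mu> *\<^sub>R (x - y) - T (x - y) = (\<mu> *\<^sub>R x - T x) - (\<mu> *\<^sub>R y - T y)"
  by (simp add: T_diff algebra_simps)

lemma subspace_shifted_range: "subspace ((\<lambda>x. \<mu> *\<^sub>R x - T x) ` D)"
  unfolding subspace_def
proof (intro conjI ballI allI)
  show "0 \<in> (\<lambda>x. \<mu> *\<^sub>R x - T x) ` D" using dom_zero T_zero by force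
  show "u + v \<in> (\<lambda>x. \<mu> *\<^sub>R x - T x) ` D" if uv: "u \<in> (\<lambda>x. \<mu> *\<^sub>R x - T x) ` D"
    "v \<in> (\<lambda>x. \<mu> *\<^sub>R x - T x) ` D" for u v
  proof -
    obtain a b where "a \<in> D" "b \<in> D" "u = \<mu> *\<^sub>R a - T a" "v = \<mu> *\<^sub>R b - T b" using uv by blast
    then have "a + b \<in> D" "u + v = \<mu> *\<^sub>R (a + b) - T (a + b)" by (simp_all add: dom_add T_add algebra_simps)
    then show ?thesis by blast
  qed
  show "c *\<^sub>R v \<in> (\<lambda>x. \<mu> *\<^sub>R x - T x) ` D" if v: "v \<in> (\<lambda>x. \<mu> *\<^sub>R x - T x) ` D" for c v
  proof -
    obtain a where a: "a \<in> D" "v = \<mu> *\<^sub>R a - T a" using v by blast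
    have "c *\<^sub>R v = \<mu> *\<^sub>R (c *\<^sub>R a) - T (c *\<^sub>R a)"
      unfolding a(2) by (simp add: T_scaleR[OF a(1)] algebra_simps)
    with dom_scaleR[OF a(1)] have "c *\<^sub>R a \<in> D" "c *\<^sub>R v = \<mu> *\<^sub>R (c *\<^sub>R a) - T (c *\<^sub>R a)"
      by blast+
    then show ?thesis by blast
  qed
qed

lemma shifted_range_sequentially_closed:
  assumes X: "\<And>n. X n \<in> (\<lambda>x. \<mu> *\<^sub>R x - T x) ` D" and "X \<longlonglongrightarrow> l"
  shows "l \<in> (\<lambda>x. \<mu> *\<^sub>R x - T x) ` D"
proof -
  have "\<exists>x. x \<in> D \<and> \<mu> *\<^sub>R x - T x = X n" for n using X[of n] by (auto simp: image_iff)
  then obtain x where x: "\<And>n. x n \<in> D" "\<And>n. \<mu> *\<^sub>R x n - T (x n) = X n" by metis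
  text \<open>\<open>norm x \<le> norm ((\<mu> - T) x)\<close> transfers the Cauchy property from \<open>X\<close> to \<open>x\<close>.\<close>
  have "Cauchy x"
  proof (rule CauchyI)
    fix e :: real assume "0 < e"
    then obtain M where M: "\<And>m n. M \<le> m \<Longrightarrow> M \<le> n \<Longrightarrow> norm (X m - X n) < e"
      using CauchyD[OF LIMSEQ_imp_Cauchy[OF \<open>X \<longlonglongrightarrow> l\<close>]] by blast
    have "norm (x m - x n) < e" if "M \<le> m" "M \<le> n" for m n
    proof -
      have "norm (x m - x n) \<le> norm (X m - X n)"
        using norm_le_shifted[OF dom_diff[OF x(1) x(1)], of m n] shifted_diff[OF x(1) x(1), of m n]
        by (simp add: x(2))
      also have "\<dots> < e" using M[OF that] .
      finally show ?thesis .
    qed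
    then show "\<exists>M. \<forall>m\<ge>M. \<forall>n\<ge>M. norm (x m - x n) < e" by blast
  qed
  then obtain x\<^sub>0 where x\<^sub>0: "x \<longlonglongrightarrow> x\<^sub>0" by (auto simp: Cauchy_convergent_iff convergent_def)
  have "inner (T z) x\<^sub>0 = inner z (\<mu> *\<^sub>R x\<^sub>0 - l)" if z: "z \<in> D" for z
  proof (rule LIMSEQ_unique)
    show "(\<lambda>n. inner (T z) (x n)) \<longlonglongrightarrow> inner (T z) x\<^sub>0" using x\<^sub>0 by (intro tendsto_intros)
    have "T (x n) = \<mu> *\<^sub>R x n - X n" for n using x(2)[of n] by (simp add: algebra_simps)
    then have "inner (T z) (x n) = inner z (\<mu> *\<^sub>R x n - X n)" for n
      using symmetric[OF z x(1)[of n]] by simp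
    moreover have "(\<lambda>n. inner z (\<mu> *\<^sub>R x n - X n)) \<longlonglongrightarrow> inner z (\<mu> *\<^sub>R x\<^sub>0 - l)"
      using x\<^sub>0 \<open>X \<longlonglongrightarrow> l\<close> by (intro tendsto_intros)
    ultimately show "(\<lambda>n. inner (T z) (x n)) \<longlonglongrightarrow> inner z (\<mu> *\<^sub>R x\<^sub>0 - l)" by simp
  qed
  then have "\<forall>z\<in>D. inner (T z) x\<^sub>0 = inner z (\<mu> *\<^sub>R x\<^sub>0 - l)" by blast
  then have "x\<^sub>0 \<in> D" "T x\<^sub>0 = \<mu> *\<^sub>R x\<^sub>0 - l" by (rule adjoint_eq)+
  then show ?thesis by force
qed

lemma closed_shifted_range: "closed ((\<lambda>x. \<mu> *\<^sub>R x - T x) ` D)"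
  by (rule closed_sequential_limits[THEN iffD2]) (use shifted_range_sequentially_closed in blast)

text \<open>The residual of the orthogonal projection onto the closed range of \<open>\<mu> - T\<close> lies in the
  domain of the adjoint \<open>T\<close> and in the kernel of \<open>\<mu> - T\<close>, which is trivial.\<close>

lemma shifted_surj: "\<exists>x\<in>D. \<mu> *\<^sub>R x - T x = y"
proof -
  obtain v where v: "v \<in> (\<lambda>x. \<mu> *\<^sub>R x - T x) ` D"
    "\<And>w. w \<in> (\<lambda>x. \<mu> *\<^sub>R x - T x) ` D \<Longrightarrow> inner (y - v) w = 0"
    using orthogonal_projection_exists[OF subspace_shifted_range closed_shifted_range] by blast
  have "inner (T z) (y - v) = inner z (\<mu> *\<^sub>R (y - v))" if "z \<in> D" for z
    using v(2)[of "\<mu> *\<^sub>R z - T z"] that by (simp add: inner_diff_right inner_commute)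
  then have "\<forall>z\<in>D. inner (T z) (y - v) = inner z (\<mu> *\<^sub>R (y - v))" by blast
  then have "y - v \<in> D" "T (y - v) = \<mu> *\<^sub>R (y - v)" by (rule adjoint_eq)+
  then have "y = v" using norm_le_shifted[of "y - v"] by simp
  with v(1) show ?thesis by blast
qed

definition resolvent :: "'a \<Rightarrow> 'a" where
  "resolvent y = (SOME x. x \<in> D \<and> \<mu> *\<^sub>R x - T x = y)"

lemma resolvent_dom: "resolvent y \<in> D"
  and shifted_resolvent: "\<mu> *\<^sub>R resolvent y - T (resolvent y) = y"
  using someI_ex[OF shifted_surj[of y, unfolded Bex_def]] by (auto simp: resolvent_def)

lemma resolvent_shifted:
  assumes x: "x \<in> D"
  shows "resolvent (\<mu> *\<^sub>R x - T x) = x"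
proof -
  let ?y = "\<mu> *\<^sub>R x - T x"
  have "\<mu> *\<^sub>R (resolvent ?y - x) - T (resolvent ?y - x) = 0"
    using shifted_resolvent[of ?y] shifted_diff[OF resolvent_dom x] by simp
  then show ?thesis using norm_le_shifted[OF dom_diff[OF resolvent_dom x], of ?y] by simp
qed

lemma bounded_symmetric_resolvent: "bounded_symmetric_operator resolvent 1"
proof unfold_locales
  show "resolvent (x + y) = resolvent x + resolvent y" for x y
  proof -
    have "\<mu> *\<^sub>R (resolvent x + resolvent y) - T (resolvent x + resolvent y) = x + y"
      using shifted_resolvent[of x] shifted_resolvent[of y]
      by (simp add: T_add[OF resolvent_dom resolvent_dom] algebra_simps)
    then show ?thesis using resolvent_shifted[OF dom_add[OF resolvent_dom resolvent_dom], of x y] by simp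
  qed
  show "resolvent (c *\<^sub>R x) = c *\<^sub>R resolvent x" for c x
  proof -
    have "\<mu> *\<^sub>R (c *\<^sub>R resolvent x) - T (c *\<^sub>R resolvent x)
        = c *\<^sub>R (\<mu> *\<^sub>R resolvent x - T (resolvent x))"
      by (simp add: T_scaleR[OF resolvent_dom] scaleR_diff_right)
    then have "\<mu> *\<^sub>R (c *\<^sub>R resolvent x) - T (c *\<^sub>R resolvent x) = c *\<^sub>R x"
      by (simp add: shifted_resolvent)
    then show ?thesis using resolvent_shifted[OF dom_scaleR[OF resolvent_dom], of c x] by simp
  qed
  show "inner (resolvent x) y = inner x (resolvent y)" for x y
  proof -
    have "inner (resolvent x) (\<mu> *\<^sub>R resolvent y - T (resolvent y))
        = inner (\<mu> *\<^sub>R resolvent x - T (resolvent x)) (resolvent y)"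
      using symmetric[OF resolvent_dom resolvent_dom, of x y]
      by (simp add: inner_diff_left inner_diff_right inner_commute)
    then show ?thesis by (simp add: shifted_resolvent)
  qed
  show "norm (resolvent x) \<le> 1 * norm x" for x
    using norm_le_shifted[OF resolvent_dom, of x] by (simp add: shifted_resolvent)
qed (simp_all add: subspace_UNIV)

sublocale resolvent: bounded_symmetric_operator resolvent 1
  by (rule bounded_symmetric_resolvent)

text \<open>A Jensen-type inequality \<open>\<langle>R x, x\<rangle> \<langle>(\<mu> - T) x, x\<rangle> \<ge> 1\<close> for the resolvent \<open>R\<close>:
  Cauchy--Schwarz for the positive form of \<open>\<mu> - T\<close>, applied to \<open>R x\<close> and \<open>x\<close>.\<close>

lemma resolvent_form_ge:
  assumes x: "x \<in> D" "norm x = 1"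
  shows "1 \<le> inner (resolvent x) x * inner (\<mu> *\<^sub>R x - T x) x"
proof -
  interpret S: symmetric_operator D "\<lambda>x. \<mu> *\<^sub>R x + (-1) *\<^sub>R T x"
    by (rule symmetric_operator_affine)
  have pos: "0 \<le> inner (\<mu> *\<^sub>R z + (-1) *\<^sub>R T z) z" if "z \<in> D" for z
    using order_trans[OF zero_le_power2 shifted_form_ge[OF that]] by simp
  have "(inner (\<mu> *\<^sub>R resolvent x + (-1) *\<^sub>R T (resolvent x)) x)\<^sup>2
      \<le> inner (\<mu> *\<^sub>R resolvent x + (-1) *\<^sub>R T (resolvent x)) (resolvent x)
        * inner (\<mu> *\<^sub>R x + (-1) *\<^sub>R T x) x"
    using pos[OF dom_add[OF resolvent_dom dom_scaleR[OF x(1)]]]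
    by (intro S.form_cauchy_schwarz[OF resolvent_dom x(1)])
  then show ?thesis using x(2) shifted_resolvent[of x] by (simp add: dot_square_norm inner_commute)
qed

lemma ess_numrange_resolvent:
  assumes "l \<in> ess_numrange D T"
  obtains v where "v \<in> ess_numrange UNIV resolvent" "1 / (\<mu> - l) \<le> v"
proof -
  obtain xs where xs: "unit_weakly_null D xs" "(\<lambda>k. inner (T (xs k)) (xs k)) \<longlonglongrightarrow> l"
    using assms unfolding ess_numrange_def by blast
  have x_D: "xs k \<in> D" and x_unit: "norm (xs k) = 1" for k
    using xs(1) unfolding unit_weakly_null_def by auto
  have shifted: "inner (\<mu> *\<^sub>R xs k - T (xs k)) (xs k) = \<mu> - inner (T (xs k)) (xs k)" for k
    using x_unit[of k] by (simp add: inner_diff_left dot_square_norm)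
  have shifted_ge: "1 \<le> \<mu> - inner (T (xs k)) (xs k)" for k
    using shifted_form_ge[OF x_D[of k]] x_unit[of k] shifted[of k] by simp
  obtain f v where f: "strict_mono f" "(\<lambda>n. inner (resolvent (xs (f n))) (xs (f n))) \<longlonglongrightarrow> v"
    and v: "v \<in> ess_numrange UNIV resolvent"
  proof (rule ess_numrange_subseq_limit)
    show "unit_weakly_null UNIV xs" using xs(1) by (simp add: unit_weakly_null_def)
    show "\<bar>inner (resolvent (xs k)) (xs k)\<bar> \<le> 1" for k
      using resolvent.abs_form_le[of "xs k"] x_unit by simp
  qed
  have "l < \<mu>" using ess_numrange_le_form_bound[OF form_le assms] by simp
  have "(\<lambda>n. 1 / (\<mu> - inner (T (xs (f n))) (xs (f n)))) \<longlonglongrightarrow> 1 / (\<mu> - l)"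
    using LIMSEQ_subseq_LIMSEQ[OF xs(2) f(1)] \<open>l < \<mu>\<close> by (intro tendsto_intros) (auto simp: comp_def)
  moreover have "1 / (\<mu> - inner (T (xs k)) (xs k)) \<le> inner (resolvent (xs k)) (xs k)" for k
    using resolvent_form_ge[OF x_D[of k] x_unit[of k]] shifted[of k] shifted_ge[of k]
    by (simp add: divide_le_eq mult.commute)
  ultimately have "1 / (\<mu> - l) \<le> v" using f(2) by (intro LIMSEQ_le) auto
  with v show ?thesis using that by blast
qed

lemma ess_spectrum_resolvent:
  assumes r: "r \<in> ess_spectrum UNIV resolvent" "0 < r"
  shows "\<mu> - 1 / r \<in> ess_spectrum D T"
proof -
  obtain u where u: "unit_weakly_null UNIV u" "(\<lambda>k. norm (resolvent (u k) - r *\<^sub>R u k)) \<longlonglongrightarrow> 0"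
    using r(1) unfolding ess_spectrum_def by blast
  have u_unit: "norm (u k) = 1" for k using u(1) unfolding unit_weakly_null_def by blast
  show ?thesis
  proof (rule ess_spectrum_if_approx_eigen[where x="\<lambda>k. resolvent (u k)" and \<delta>="r / 2"])
    show "resolvent (u k) \<in> D" for k by (rule resolvent_dom)
    show "weakly_null (\<lambda>k. resolvent (u k))"
      using u(1) unfolding unit_weakly_null_def weakly_null_def by (simp add: resolvent.symmetric)
    have "norm (norm (resolvent (u k)) - r) \<le> 1 * norm (norm (resolvent (u k) - r *\<^sub>R u k))" for k
      using norm_triangle_ineq3[of "resolvent (u k)" "r *\<^sub>R u k"] u_unit[of k] r(2) by simp
    then have "(\<lambda>k. norm (resolvent (u k)) - r) \<longlonglongrightarrow> 0" by (rule LIMSEQ_zero_if_norm_le[OF u(2)])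
    then have "eventually (\<lambda>k. r / 2 < norm (resolvent (u k))) sequentially"
      using r(2) by (intro order_tendstoD(1)) (auto simp: LIM_zero_iff)
    then show "eventually (\<lambda>k. r / 2 \<le> norm (resolvent (u k))) sequentially"
      by (rule eventually_mono) simp
    have "T (resolvent (u k)) - (\<mu> - 1 / r) *\<^sub>R resolvent (u k)
        = (1 / r) *\<^sub>R (resolvent (u k) - r *\<^sub>R u k)" for k
      using shifted_resolvent[of "u k"] r(2) by (simp add: algebra_simps)
    then have "norm (norm (T (resolvent (u k)) - (\<mu> - 1 / r) *\<^sub>R resolvent (u k)))
        \<le> 1 / r * norm (norm (resolvent (u k) - r *\<^sub>R u k))" for k
      using r(2) by simp
    then show "(\<lambda>k. norm (T (resolvent (u k)) - (\<mu> - 1 / r) *\<^sub>R resolvent (u k))) \<longlonglongrightarrow> 0"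
      by (rule LIMSEQ_zero_if_norm_le[OF u(2)])
  qed (use r(2) in simp)
qed

end

context selfadjoint_operator
begin

theorem ess_spectrum_ge_if_form_bdd_above:
  assumes "form_bdd_above D T" "l \<in> ess_numrange D T"
  shows "\<exists>b\<in>ess_spectrum D T. l \<le> b"
proof -
  obtain C where "\<And>x. x \<in> D \<Longrightarrow> inner (T x) x \<le> C * (norm x)\<^sup>2"
    using assms(1) unfolding form_bdd_above_def by blast
  then interpret S: selfadjoint_shifted D T "C + 1" by unfold_locales simp
  obtain v where v: "v \<in> ess_numrange UNIV S.resolvent" "1 / (C + 1 - l) \<le> v"
    using S.ess_numrange_resolvent[OF assms(2)] by blast
  define r where "r = Sup (ess_numrange UNIV S.resolvent)"
  have r: "r \<in> ess_spectrum UNIV S.resolvent"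
    unfolding r_def using v(1) by (intro S.resolvent.Sup_ess_numrange_in_ess_spectrum) auto
  have "v \<le> r" unfolding r_def using v(1) S.resolvent.bdd_above_ess_numrange by (rule cSup_upper)
  have "l < C + 1" using ess_numrange_le_form_bound[OF S.form_le assms(2)] by simp
  then have "0 < 1 / (C + 1 - l)" by simp
  then have "0 < r" "1 / (C + 1 - l) \<le> r" using v(2) \<open>v \<le> r\<close> by linarith+
  then have "1 / r \<le> C + 1 - l" using \<open>l < C + 1\<close> by (simp add: divide_le_eq mult.commute)
  then have "l \<le> C + 1 - 1 / r" by simp
  with S.ess_spectrum_resolvent[OF r \<open>0 < r\<close>] show ?thesis by blast
qed

lemma ess_spectrum_le_if_form_bdd_below:
  assumes "form_bdd_below D T" "l \<in> ess_numrange D T"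
  shows "\<exists>a\<in>ess_spectrum D T. a \<le> l"
proof -
  interpret N: selfadjoint_operator D "\<lambda>x. - T x" by (rule selfadjoint_operator_uminus)
  have "form_bdd_above D (\<lambda>x. - T x)" "- l \<in> ess_numrange D (\<lambda>x. - T x)"
    using assms by (simp_all add: form_bdd_above_uminus ess_numrange_uminus)
  then obtain b where "b \<in> ess_spectrum D (\<lambda>x. - T x)" "- l \<le> b"
    using N.ess_spectrum_ge_if_form_bdd_above by blast
  then show ?thesis by (intro bexI[of _ "- b"]) (auto simp: ess_spectrum_uminus)
qed

theorem ess_numrange_iff:
  "l \<in> ess_numrange D T \<longleftrightarrow>
     ((\<exists>a\<in>ess_spectrum D T. a \<le> l) \<or> \<not> form_bdd_below D T) \<and>
     ((\<exists>b\<in>ess_spectrum D T. l \<le> b) \<or> \<not> form_bdd_above D T)"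
proof
  assume "l \<in> ess_numrange D T"
  then show "((\<exists>a\<in>ess_spectrum D T. a \<le> l) \<or> \<not> form_bdd_below D T) \<and>
     ((\<exists>b\<in>ess_spectrum D T. l \<le> b) \<or> \<not> form_bdd_above D T)"
    using ess_spectrum_le_if_form_bdd_below ess_spectrum_ge_if_form_bdd_above by blast
next
  assume H: "((\<exists>a\<in>ess_spectrum D T. a \<le> l) \<or> \<not> form_bdd_below D T) \<and>
     ((\<exists>b\<in>ess_spectrum D T. l \<le> b) \<or> \<not> form_bdd_above D T)"
  show "l \<in> ess_numrange D T"
  proof (cases "l \<in> ess_spectrum D T")
    case True
    then show ?thesis using ess_spectrum_subset_ess_numrange by blast
  next
    case False
    with H have "(\<exists>a\<in>ess_spectrum D T. a < l) \<or> \<not> form_bdd_below D T"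
      "(\<exists>b\<in>ess_spectrum D T. l < b) \<or> \<not> form_bdd_above D T"
      by (metis order.order_iff_strict)+
    then obtain xs ys where "unit_weakly_null D xs" "\<And>k. inner (T (xs k)) (xs k) \<le> l"
      "unit_weakly_null D ys" "\<And>k. l \<le> inner (T (ys k)) (ys k)"
      using unit_weakly_null_form_le unit_weakly_null_form_ge by metis
    then show ?thesis by (rule ess_numrange_if_form_le_ge)
  qed
qed

end

section \<open>The sequence space as a real Hilbert space\<close>

lemma l2_prod_summable:
  assumes "x \<in> l2" "y \<in> l2"
  shows "summable (\<lambda>n. x n * cnj (y n))"
proof (rule summable_norm_cancel, rule summable_comparison_test')
  show "summable (\<lambda>n. ((cmod (x n))\<^sup>2 + (cmod (y n))\<^sup>2) / 2)"
    using assms unfolding l2_def by (intro summable_divide summable_add) auto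
  show "norm (norm (x n * cnj (y n))) \<le> ((cmod (x n))\<^sup>2 + (cmod (y n))\<^sup>2) / 2" for n
  proof -
    have "0 \<le> (cmod (x n) - cmod (y n))\<^sup>2" by simp
    then show ?thesis by (simp add: norm_mult power2_eq_square algebra_simps)
  qed
qed

lemma l2_add: "x \<in> l2 \<Longrightarrow> y \<in> l2 \<Longrightarrow> (\<lambda>n. x n + y n) \<in> l2"
  unfolding l2_def
proof (simp, rule summable_comparison_test')
  assume "summable (\<lambda>n. (cmod (x n))\<^sup>2)" "summable (\<lambda>n. (cmod (y n))\<^sup>2)"
  then show "summable (\<lambda>n. 2 * (cmod (x n))\<^sup>2 + 2 * (cmod (y n))\<^sup>2)"
    by (intro summable_add summable_mult)
  show "norm ((cmod (x n + y n))\<^sup>2) \<le> 2 * (cmod (x n))\<^sup>2 + 2 * (cmod (y n))\<^sup>2" for n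
  proof -
    have "(cmod (x n + y n))\<^sup>2 \<le> (cmod (x n) + cmod (y n))\<^sup>2"
      using norm_triangle_ineq by (intro power_mono) auto
    moreover have "0 \<le> (cmod (x n) - cmod (y n))\<^sup>2" by simp
    ultimately show ?thesis by (simp add: power2_eq_square algebra_simps)
  qed
qed

lemma l2_scale: "x \<in> l2 \<Longrightarrow> (\<lambda>n. c * x n) \<in> l2"
  unfolding l2_def by (simp add: norm_mult power_mult_distrib summable_mult)

lemma l2_uminus: "x \<in> l2 \<Longrightarrow> (\<lambda>n. - x n) \<in> l2"
  unfolding l2_def by simp

lemma l2_diff: "x \<in> l2 \<Longrightarrow> y \<in> l2 \<Longrightarrow> (\<lambda>n. x n - y n) \<in> l2"
  using l2_add[of x "\<lambda>n. - y n"] l2_uminus[of y] by simp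

lemma l2_zero: "(\<lambda>n. 0) \<in> l2"
  unfolding l2_def by simp

lemma linner_self: "x \<in> l2 \<Longrightarrow> linner x x = complex_of_real (\<Sum>n. (cmod (x n))\<^sup>2)"
  unfolding linner_def l2_def by (simp add: complex_norm_square[symmetric] suminf_of_real)

lemma l2norm_sq: "x \<in> l2 \<Longrightarrow> (l2norm x)\<^sup>2 = (\<Sum>n. (cmod (x n))\<^sup>2)"
  unfolding l2norm_def l2_def by (simp add: suminf_nonneg)

lemma linner_cnj:
  assumes "x \<in> l2" "y \<in> l2"
  shows "linner y x = cnj (linner x y)"
proof -
  have "(\<lambda>n. x n * cnj (y n)) sums linner x y"
    unfolding linner_def using l2_prod_summable[OF assms] by (rule summable_sums)
  then have "(\<lambda>n. y n * cnj (x n)) sums cnj (linner x y)"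
    using sums_cnj[of "\<lambda>n. x n * cnj (y n)"] by (simp add: mult.commute)
  then show ?thesis unfolding linner_def by (rule sums_unique[symmetric])
qed

lemma Re_linner_commute: "x \<in> l2 \<Longrightarrow> y \<in> l2 \<Longrightarrow> Re (linner x y) = Re (linner y x)"
  by (simp add: linner_cnj[of x y])

lemma linner_add_left:
  "x \<in> l2 \<Longrightarrow> y \<in> l2 \<Longrightarrow> z \<in> l2 \<Longrightarrow> linner (\<lambda>n. x n + y n) z = linner x z + linner y z"
  unfolding linner_def using l2_prod_summable[of x z] l2_prod_summable[of y z]
  by (simp add: suminf_add distrib_right)

lemma linner_scale_left: "x \<in> l2 \<Longrightarrow> z \<in> l2 \<Longrightarrow> linner (\<lambda>n. c * x n) z = c * linner x z"
  unfolding linner_def using l2_prod_summable[of x z] by (simp add: suminf_mult mult.assoc)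

lemma linner_scale_right:
  assumes "x \<in> l2" "y \<in> l2"
  shows "linner x (\<lambda>n. c * y n) = cnj c * linner x y"
proof -
  have "linner x (\<lambda>n. c * y n) = cnj (c * linner y x)"
    using linner_cnj[OF l2_scale[OF assms(2)] assms(1)] linner_scale_left[OF assms(2,1)] by simp
  then show ?thesis using linner_cnj[OF assms(2,1)] by simp
qed

lemma l2_suminf_eq_zero_iff: "x \<in> l2 \<Longrightarrow> (\<Sum>n. (cmod (x n))\<^sup>2) = 0 \<longleftrightarrow> x = (\<lambda>n. 0)"
  unfolding l2_def by (subst suminf_eq_zero_iff) (auto simp: fun_eq_iff)

typedef ell2 = l2 morphisms vec_of to_ell2
  using l2_zero by blast

setup_lifting type_definition_ell2

instantiation ell2 :: real_vector
begin
lift_definition zero_ell2 :: ell2 is "\<lambda>n. 0" by (rule l2_zero)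
lift_definition plus_ell2 :: "ell2 \<Rightarrow> ell2 \<Rightarrow> ell2" is "\<lambda>x y n. x n + y n" by (rule l2_add)
lift_definition uminus_ell2 :: "ell2 \<Rightarrow> ell2" is "\<lambda>x n. - x n" by (rule l2_uminus)
lift_definition minus_ell2 :: "ell2 \<Rightarrow> ell2 \<Rightarrow> ell2" is "\<lambda>x y n. x n - y n" by (rule l2_diff)
lift_definition scaleR_ell2 :: "real \<Rightarrow> ell2 \<Rightarrow> ell2" is "\<lambda>r x n. complex_of_real r * x n"
  by (rule l2_scale)
instance
  by standard (transfer; auto simp: algebra_simps)+
end

text \<open>A complex Hilbert space is a real one for the inner product \<open>Re \<langle>x, y\<rangle>\<close>.\<close>

instantiation ell2 :: real_inner
begin
lift_definition inner_ell2 :: "ell2 \<Rightarrow> ell2 \<Rightarrow> real" is "\<lambda>x y. Re (linner x y)" .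
lift_definition norm_ell2 :: "ell2 \<Rightarrow> real" is "l2norm" .
definition dist_ell2 :: "ell2 \<Rightarrow> ell2 \<Rightarrow> real" where "dist_ell2 x y = norm (x - y)"
definition sgn_ell2 :: "ell2 \<Rightarrow> ell2" where "sgn_ell2 x = x /\<^sub>R norm x"
definition uniformity_ell2 :: "(ell2 \<times> ell2) filter" where
  "uniformity_ell2 = (INF e\<in>{0<..}. principal {(x, y). dist x y < e})"
definition open_ell2 :: "ell2 set \<Rightarrow> bool" where
  "open_ell2 U \<longleftrightarrow> (\<forall>x\<in>U. \<forall>\<^sub>F (x', y) in uniformity. x' = x \<longrightarrow> y \<in> U)"
instance
proof
  show "dist x y = norm (x - y)" for x y :: ell2 by (simp add: dist_ell2_def)
  show "sgn x = x /\<^sub>R norm x" for x :: ell2 by (simp add: sgn_ell2_def)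
  show "(uniformity :: (ell2 \<times> ell2) filter) = (INF e\<in>{0<..}. principal {(x, y). dist x y < e})"
    by (simp add: uniformity_ell2_def)
  show "open U \<longleftrightarrow> (\<forall>x\<in>U. \<forall>\<^sub>F (x', y) in uniformity. x' = x \<longrightarrow> y \<in> U)" for U :: "ell2 set"
    by (simp add: open_ell2_def)
  show "inner x y = inner y x" for x y :: ell2
    by transfer (rule Re_linner_commute)
  show "inner (x + y) z = inner x z + inner y z" for x y z :: ell2
    by transfer (simp add: linner_add_left)
  show "inner (r *\<^sub>R x) y = r * inner x y" for r and x y :: ell2
    by transfer (simp add: linner_scale_left)
  show "0 \<le> inner x x" for x :: ell2
    by transfer (simp add: linner_self l2_def suminf_nonneg)
  show "inner x x = 0 \<longleftrightarrow> x = 0" for x :: ell2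
    by transfer (simp add: linner_self l2_suminf_eq_zero_iff)
  show "norm x = sqrt (inner x x)" for x :: ell2
    by transfer (simp add: linner_self l2norm_def)
qed
end

lemma norm_ell2_sq: "(norm a)\<^sup>2 = (\<Sum>n. (cmod (vec_of a n))\<^sup>2)"
  using vec_of[of a] by (simp add: norm_ell2.rep_eq l2norm_sq)

lemma partial_sum_sq_le_norm_ell2: "(\<Sum>n<M. (cmod (vec_of a n))\<^sup>2) \<le> (norm a)\<^sup>2"
  unfolding norm_ell2_sq using vec_of[of a] unfolding l2_def by (intro sum_le_suminf) auto

lemma coordinate_le_norm_ell2: "cmod (vec_of a n) \<le> norm a"
proof -
  have "(\<Sum>m\<in>{n}. (cmod (vec_of a m))\<^sup>2) \<le> (norm a)\<^sup>2"
    unfolding norm_ell2_sq using vec_of[of a] unfolding l2_def by (intro sum_le_suminf) auto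
  then have "(cmod (vec_of a n))\<^sup>2 \<le> (norm a)\<^sup>2" by simp
  then show ?thesis by (rule power2_le_imp_le) simp
qed

text \<open>For a Cauchy sequence converging coordinatewise to \<open>x\<close>, the tails of \<open>X k - x\<close> are
  uniformly small: pass to the limit in the partial sums of \<open>norm (X k - X m)\<^sup>2\<close>.\<close>

lemma ell2_Cauchy_coordinatewise_limit:
  assumes C: "Cauchy X" and x: "\<And>n. (\<lambda>k. vec_of (X k) n) \<longlonglongrightarrow> x n" and "0 < e"
  shows "\<exists>N. \<forall>k\<ge>N. (\<lambda>n. vec_of (X k) n - x n) \<in> l2 \<and> (\<Sum>n. (cmod (vec_of (X k) n - x n))\<^sup>2) \<le> e\<^sup>2"
proof -
  obtain N where N: "\<And>m k. N \<le> m \<Longrightarrow> N \<le> k \<Longrightarrow> norm (X m - X k) < e"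
    using CauchyD[OF C \<open>0 < e\<close>] by blast
  have partial: "(\<Sum>n<M. (cmod (vec_of (X k) n - x n))\<^sup>2) \<le> e\<^sup>2" if k: "N \<le> k" for k M
  proof (rule tendsto_upperbound)
    show "(\<lambda>m. \<Sum>n<M. (cmod (vec_of (X k) n - vec_of (X m) n))\<^sup>2)
        \<longlonglongrightarrow> (\<Sum>n<M. (cmod (vec_of (X k) n - x n))\<^sup>2)"
      using x by (intro tendsto_intros)
    show "eventually (\<lambda>m. (\<Sum>n<M. (cmod (vec_of (X k) n - vec_of (X m) n))\<^sup>2) \<le> e\<^sup>2) sequentially"
      unfolding eventually_sequentially
    proof (intro exI allI impI)
      fix m assume "N \<le> m"
      have "(\<Sum>n<M. (cmod (vec_of (X k) n - vec_of (X m) n))\<^sup>2) \<le> (norm (X k - X m))\<^sup>2"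
        using partial_sum_sq_le_norm_ell2[where M=M and a="X k - X m"] by (simp add: minus_ell2.rep_eq)
      also have "\<dots> \<le> e\<^sup>2" using N[OF k \<open>N \<le> m\<close>] by (intro power_mono) auto
      finally show "(\<Sum>n<M. (cmod (vec_of (X k) n - vec_of (X m) n))\<^sup>2) \<le> e\<^sup>2" .
    qed
  qed simp
  show ?thesis
  proof (intro exI allI impI conjI)
    fix k assume k: "N \<le> k"
    have sum: "summable (\<lambda>n. (cmod (vec_of (X k) n - x n))\<^sup>2)"
      using partial[OF k] by (intro summableI_nonneg_bounded) auto
    then show "(\<lambda>n. vec_of (X k) n - x n) \<in> l2" unfolding l2_def by simp
    show "(\<Sum>n. (cmod (vec_of (X k) n - x n))\<^sup>2) \<le> e\<^sup>2"
      by (rule suminf_le_const[OF sum partial[OF k]])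
  qed
qed

instance ell2 :: complete_space
proof
  fix X :: "nat \<Rightarrow> ell2" assume C: "Cauchy X"
  have "Cauchy (\<lambda>k. vec_of (X k) n)" for n
  proof (rule CauchyI)
    fix e :: real assume "0 < e"
    then obtain M where M: "\<And>m k. M \<le> m \<Longrightarrow> M \<le> k \<Longrightarrow> norm (X m - X k) < e"
      using CauchyD[OF C] by blast
    have "norm (vec_of (X m) n - vec_of (X k) n) < e" if "M \<le> m" "M \<le> k" for m k
      using coordinate_le_norm_ell2[where a="X m - X k" and n=n] M[OF that] by (simp add: minus_ell2.rep_eq)
    then show "\<exists>M. \<forall>m\<ge>M. \<forall>k\<ge>M. norm (vec_of (X m) n - vec_of (X k) n) < e" by blast
  qed
  then have "\<exists>l. (\<lambda>k. vec_of (X k) n) \<longlonglongrightarrow> l" for n by (simp add: Cauchy_convergent_iff convergent_def)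
  then obtain x where x: "\<And>n. (\<lambda>k. vec_of (X k) n) \<longlonglongrightarrow> x n" by metis
  obtain N where "(\<lambda>n. vec_of (X N) n - x n) \<in> l2"
    using ell2_Cauchy_coordinatewise_limit[OF C x zero_less_one] by blast
  from l2_diff[OF vec_of[of "X N"] this] have "x \<in> l2" by simp
  then have vec_L: "vec_of (to_ell2 x) = x" by (simp add: to_ell2_inverse)
  have "X \<longlonglongrightarrow> to_ell2 x"
  proof (rule LIMSEQ_I)
    fix r :: real assume "0 < r"
    then obtain N where N: "\<And>k. N \<le> k \<Longrightarrow> (\<Sum>n. (cmod (vec_of (X k) n - x n))\<^sup>2) \<le> (r/2)\<^sup>2"
      using ell2_Cauchy_coordinatewise_limit[OF C x, of "r/2"] by auto
    have "norm (X k - to_ell2 x) < r" if "N \<le> k" for k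
    proof -
      have "(norm (X k - to_ell2 x))\<^sup>2 \<le> (r/2)\<^sup>2"
        using N[OF that] by (simp add: norm_ell2_sq minus_ell2.rep_eq vec_L)
      then have "norm (X k - to_ell2 x) \<le> r/2" by (rule power2_le_imp_le) (use \<open>0 < r\<close> in simp)
      then show ?thesis using \<open>0 < r\<close> by simp
    qed
    then show "\<exists>no. \<forall>n\<ge>no. norm (X n - to_ell2 x) < r" by blast
  qed
  then show "convergent X" unfolding convergent_def by blast
qed

lemma weak_to_zero_iff_weakly_null:
  assumes "\<And>k. xs k \<in> l2"
  shows "weak_to_zero xs \<longleftrightarrow> weakly_null (\<lambda>k. to_ell2 (xs k))"
proof
  assume w: "weak_to_zero xs"
  show "weakly_null (\<lambda>k. to_ell2 (xs k))"
    unfolding weakly_null_def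
  proof
    fix y :: ell2
    have "(\<lambda>k. Re (linner (xs k) (vec_of y))) \<longlonglongrightarrow> Re 0"
      using w vec_of[of y] unfolding weak_to_zero_def by (intro tendsto_Re) blast
    then show "(\<lambda>k. inner (to_ell2 (xs k)) y) \<longlonglongrightarrow> 0"
      using assms by (simp add: inner_ell2.rep_eq to_ell2_inverse)
  qed
next
  assume w: "weakly_null (\<lambda>k. to_ell2 (xs k))"
  show "weak_to_zero xs"
    unfolding weak_to_zero_def
  proof
    fix y assume y: "y \<in> l2"
    text \<open>The imaginary part is the real part against \<open>i y\<close>.\<close>
    have "(\<lambda>k. inner (to_ell2 (xs k)) (to_ell2 y)) \<longlonglongrightarrow> 0"
      "(\<lambda>k. inner (to_ell2 (xs k)) (to_ell2 (\<lambda>n. \<i> * y n))) \<longlonglongrightarrow> 0"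
      using w unfolding weakly_null_def by blast+
    then have "(\<lambda>k. Re (linner (xs k) y)) \<longlonglongrightarrow> 0" "(\<lambda>k. Im (linner (xs k) y)) \<longlonglongrightarrow> 0"
      using assms y l2_scale[OF y, of \<i>]
      by (simp_all add: inner_ell2.rep_eq to_ell2_inverse linner_scale_right)
    then show "(\<lambda>k. linner (xs k) y) \<longlonglongrightarrow> 0" by (simp add: tendsto_complex_iff)
  qed
qed

definition ell2_dom :: "vec set \<Rightarrow> ell2 set" where
  "ell2_dom D = {a. vec_of a \<in> D}"

definition ell2_op :: "(vec \<Rightarrow> vec) \<Rightarrow> ell2 \<Rightarrow> ell2" where
  "ell2_op T a = to_ell2 (T (vec_of a))"

locale l2_selfadjoint =
  fixes D :: "vec set" and T :: "vec \<Rightarrow> vec"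
  assumes selfadjoint: "selfadjoint D T"
begin

lemma lin_op: "lin_op D T"
  using selfadjoint unfolding selfadjoint_def by blast

lemma dom_l2: "x \<in> D \<Longrightarrow> x \<in> l2"
  and op_l2: "x \<in> D \<Longrightarrow> T x \<in> l2"
  using lin_op unfolding lin_op_def by blast+

lemma linner_symmetric: "x \<in> D \<Longrightarrow> y \<in> D \<Longrightarrow> linner (T x) y = linner x (T y)"
  using selfadjoint unfolding selfadjoint_def by blast

lemma to_ell2_in_ell2_dom: "x \<in> D \<Longrightarrow> to_ell2 x \<in> ell2_dom D"
  by (simp add: ell2_dom_def to_ell2_inverse dom_l2)

lemma vec_of_ell2_op: "a \<in> ell2_dom D \<Longrightarrow> vec_of (ell2_op T a) = T (vec_of a)"
  by (simp add: ell2_dom_def ell2_op_def to_ell2_inverse op_l2)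

lemma inner_ell2_op: "x \<in> D \<Longrightarrow> inner (ell2_op T (to_ell2 x)) (to_ell2 x) = Re (linner (T x) x)"
  by (simp add: ell2_op_def inner_ell2.rep_eq to_ell2_inverse dom_l2 op_l2)

lemma linner_form_real: "x \<in> D \<Longrightarrow> linner (T x) x = complex_of_real (Re (linner (T x) x))"
  using linner_symmetric[of x x] linner_cnj[OF dom_l2 op_l2, of x]
  by (simp add: complex_eq_iff)

lemma unit_weakly_null_ell2_iff:
  assumes "\<And>k. xs k \<in> D"
  shows "unit_weakly_null (ell2_dom D) (\<lambda>k. to_ell2 (xs k)) \<longleftrightarrow>
    (\<forall>k. l2norm (xs k) = 1) \<and> weak_to_zero xs"
  using assms dom_l2 weak_to_zero_iff_weakly_null[of xs]
  by (auto simp: unit_weakly_null_def to_ell2_in_ell2_dom norm_ell2.rep_eq to_ell2_inverse)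

lemma ell2_seq: "(\<lambda>k. to_ell2 (vec_of (a k))) = a"
  by (simp add: vec_of_inverse)

lemma ess_num_range_eq: "ess_num_range D T = complex_of_real ` ess_numrange (ell2_dom D) (ell2_op T)"
proof
  show "ess_num_range D T \<subseteq> complex_of_real ` ess_numrange (ell2_dom D) (ell2_op T)"
  proof
    fix \<mu> assume "\<mu> \<in> ess_num_range D T"
    then obtain xs where xs: "\<And>k. xs k \<in> D" "\<And>k. l2norm (xs k) = 1" "weak_to_zero xs"
      "(\<lambda>k. linner (T (xs k)) (xs k)) \<longlonglongrightarrow> \<mu>" unfolding ess_num_range_def by blast
    have "(\<lambda>k. complex_of_real (Re (linner (T (xs k)) (xs k)))) \<longlonglongrightarrow> \<mu>"
      using xs(4) linner_form_real[OF xs(1)] by simp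
    then have "(\<lambda>k. Re (linner (T (xs k)) (xs k))) \<longlonglongrightarrow> Re \<mu>" "Im \<mu> = 0"
      using tendsto_Re tendsto_Im[of _ \<mu>] by (fastforce simp: LIMSEQ_const_iff)+
    moreover have "unit_weakly_null (ell2_dom D) (\<lambda>k. to_ell2 (xs k))"
      using unit_weakly_null_ell2_iff[where xs=xs, OF xs(1)] xs(2,3) by simp
    ultimately have "Re \<mu> \<in> ess_numrange (ell2_dom D) (ell2_op T)"
      unfolding ess_numrange_def using inner_ell2_op[OF xs(1)] by auto
    with \<open>Im \<mu> = 0\<close> show "\<mu> \<in> complex_of_real ` ess_numrange (ell2_dom D) (ell2_op T)"
      by (metis complex_eq_iff image_eqI Im_complex_of_real Re_complex_of_real)
  qed
next
  show "complex_of_real ` ess_numrange (ell2_dom D) (ell2_op T) \<subseteq> ess_num_range D T"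
  proof
    fix \<mu> assume "\<mu> \<in> complex_of_real ` ess_numrange (ell2_dom D) (ell2_op T)"
    then obtain l a where l: "\<mu> = complex_of_real l" and a: "unit_weakly_null (ell2_dom D) a"
      "(\<lambda>k. inner (ell2_op T (a k)) (a k)) \<longlonglongrightarrow> l" unfolding ess_numrange_def by blast
    define xs where "xs k = vec_of (a k)" for k
    have xs_D: "xs k \<in> D" for k using a(1) by (simp add: xs_def unit_weakly_null_def ell2_dom_def)
    have "(\<forall>k. l2norm (xs k) = 1) \<and> weak_to_zero xs"
      using unit_weakly_null_ell2_iff[where xs=xs, OF xs_D] a(1) by (simp add: xs_def ell2_seq)
    moreover have "(\<lambda>k. linner (T (xs k)) (xs k)) \<longlonglongrightarrow> \<mu>"
      using tendsto_of_real[OF a(2), where 'a=complex] inner_ell2_op[OF xs_D] linner_form_real[OF xs_D]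
      by (simp add: l xs_def vec_of_inverse)
    ultimately show "\<mu> \<in> ess_num_range D T" unfolding ess_num_range_def using xs_D by blast
  qed
qed

lemma ess_spec_iff: "complex_of_real r \<in> ess_spec D T \<longleftrightarrow> r \<in> ess_spectrum (ell2_dom D) (ell2_op T)"
proof -
  have norm_eq: "l2norm (vsub (T x) (\<lambda>n. complex_of_real r * x n))
      = norm (ell2_op T (to_ell2 x) - r *\<^sub>R to_ell2 x)" if "x \<in> D" for x
    using that dom_l2 op_l2
    by (simp add: ell2_op_def norm_ell2.rep_eq minus_ell2.rep_eq scaleR_ell2.rep_eq to_ell2_inverse vsub_def)
  show ?thesis
  proof
    assume "complex_of_real r \<in> ess_spec D T"
    then obtain xs where xs: "\<And>k. xs k \<in> D" "\<And>k. l2norm (xs k) = 1" "weak_to_zero xs"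
      "(\<lambda>k. l2norm (vsub (T (xs k)) (\<lambda>n. complex_of_real r * xs k n))) \<longlonglongrightarrow> 0"
      unfolding ess_spec_def by blast
    then show "r \<in> ess_spectrum (ell2_dom D) (ell2_op T)"
      unfolding ess_spectrum_def using unit_weakly_null_ell2_iff[where xs=xs, OF xs(1)] norm_eq[OF xs(1)] by auto
  next
    assume "r \<in> ess_spectrum (ell2_dom D) (ell2_op T)"
    then obtain a where a: "unit_weakly_null (ell2_dom D) a"
      "(\<lambda>k. norm (ell2_op T (a k) - r *\<^sub>R a k)) \<longlonglongrightarrow> 0" unfolding ess_spectrum_def by blast
    define xs where "xs k = vec_of (a k)" for k
    have xs_D: "xs k \<in> D" for k using a(1) by (simp add: xs_def unit_weakly_null_def ell2_dom_def)
    have "(\<forall>k. l2norm (xs k) = 1) \<and> weak_to_zero xs"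
      using unit_weakly_null_ell2_iff[where xs=xs, OF xs_D] a(1) by (simp add: xs_def ell2_seq)
    moreover have "(\<lambda>k. l2norm (vsub (T (xs k)) (\<lambda>n. complex_of_real r * xs k n))) \<longlonglongrightarrow> 0"
      using a(2) norm_eq[OF xs_D] by (simp add: xs_def vec_of_inverse)
    ultimately show "complex_of_real r \<in> ess_spec D T" unfolding ess_spec_def using xs_D by blast
  qed
qed

lemma ball_ell2_dom_iff:
  "(\<forall>a\<in>ell2_dom D. P (inner (ell2_op T a) a) (norm a)) \<longleftrightarrow> (\<forall>x\<in>D. P (Re (linner (T x) x)) (l2norm x))"
proof
  assume "\<forall>a\<in>ell2_dom D. P (inner (ell2_op T a) a) (norm a)"
  then show "\<forall>x\<in>D. P (Re (linner (T x) x)) (l2norm x)"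
    using to_ell2_in_ell2_dom inner_ell2_op by (force simp: norm_ell2.rep_eq to_ell2_inverse dom_l2)
next
  assume P: "\<forall>x\<in>D. P (Re (linner (T x) x)) (l2norm x)"
  show "\<forall>a\<in>ell2_dom D. P (inner (ell2_op T a) a) (norm a)"
  proof
    fix a assume "a \<in> ell2_dom D"
    then have "vec_of a \<in> D" by (simp add: ell2_dom_def)
    then show "P (inner (ell2_op T a) a) (norm a)"
      using P inner_ell2_op[of "vec_of a"] by (simp add: vec_of_inverse norm_ell2.rep_eq)
  qed
qed

lemma bounded_above_op_iff: "bounded_above_op D T \<longleftrightarrow> form_bdd_above (ell2_dom D) (ell2_op T)"
  unfolding bounded_above_op_def form_bdd_above_def
  using ball_ell2_dom_iff[where P="\<lambda>q n. q \<le> _ * n\<^sup>2"] by simp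

lemma bounded_below_op_iff: "bounded_below_op D T \<longleftrightarrow> form_bdd_below (ell2_dom D) (ell2_op T)"
  unfolding bounded_below_op_def form_bdd_below_def
  using ball_ell2_dom_iff[where P="\<lambda>q n. _ * n\<^sup>2 \<le> q"] by simp

end

context l2_selfadjoint
begin

lemma l2_dom_zero: "(\<lambda>n. 0) \<in> D"
  and l2_dom_add: "x \<in> D \<Longrightarrow> y \<in> D \<Longrightarrow> (\<lambda>n. x n + y n) \<in> D"
  and l2_dom_scale: "x \<in> D \<Longrightarrow> (\<lambda>n. c * x n) \<in> D"
  and l2_op_add: "x \<in> D \<Longrightarrow> y \<in> D \<Longrightarrow> T (\<lambda>n. x n + y n) = (\<lambda>n. T x n + T y n)"
  and l2_op_scale: "x \<in> D \<Longrightarrow> T (\<lambda>n. c * x n) = (\<lambda>n. c * T x n)"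
  using lin_op unfolding lin_op_def vadd_def by blast+

lemma l2_dense: "x \<in> l2 \<Longrightarrow> 0 < e \<Longrightarrow> \<exists>d\<in>D. l2norm (vsub x d) < e"
  using selfadjoint unfolding selfadjoint_def densely_defined_def by blast

lemma l2_adjoint_dom: "y \<in> l2 \<Longrightarrow> z \<in> l2 \<Longrightarrow> \<forall>x\<in>D. linner (T x) y = linner x z \<Longrightarrow> y \<in> D"
  using selfadjoint unfolding selfadjoint_def by blast

lemma ell2_dom_add: "a \<in> ell2_dom D \<Longrightarrow> b \<in> ell2_dom D \<Longrightarrow> a + b \<in> ell2_dom D"
  and ell2_dom_scaleR: "a \<in> ell2_dom D \<Longrightarrow> c *\<^sub>R a \<in> ell2_dom D"
  by (simp_all add: ell2_dom_def plus_ell2.rep_eq scaleR_ell2.rep_eq l2_dom_add l2_dom_scale)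

lemma selfadjoint_operator_ell2: "selfadjoint_operator (ell2_dom D) (ell2_op T)"
proof unfold_locales
  show "subspace (ell2_dom D)"
    unfolding subspace_def using ell2_dom_add ell2_dom_scaleR
    by (simp add: ell2_dom_def zero_ell2.rep_eq l2_dom_zero)
  show "ell2_op T (a + b) = ell2_op T a + ell2_op T b" if "a \<in> ell2_dom D" "b \<in> ell2_dom D" for a b
    using that ell2_dom_add[OF that]
    by (simp add: vec_of_inject[symmetric] vec_of_ell2_op plus_ell2.rep_eq l2_op_add ell2_dom_def)
  show "ell2_op T (c *\<^sub>R a) = c *\<^sub>R ell2_op T a" if "a \<in> ell2_dom D" for a c
    using that ell2_dom_scaleR[OF that]
    by (simp add: vec_of_inject[symmetric] vec_of_ell2_op scaleR_ell2.rep_eq l2_op_scale ell2_dom_def)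
  show "inner (ell2_op T a) b = inner a (ell2_op T b)" if "a \<in> ell2_dom D" "b \<in> ell2_dom D" for a b
    using that by (simp add: inner_ell2.rep_eq vec_of_ell2_op linner_symmetric ell2_dom_def)
  show "\<exists>d\<in>ell2_dom D. norm (a - d) < e" if e: "0 < e" for a e
  proof -
    obtain d where "d \<in> D" "l2norm (vsub (vec_of a) d) < e"
      using l2_dense[OF vec_of e] by blast
    then show ?thesis
      by (intro bexI[of _ "to_ell2 d"])
        (simp_all add: to_ell2_in_ell2_dom norm_ell2.rep_eq minus_ell2.rep_eq to_ell2_inverse dom_l2 vsub_def)
  qed
  text \<open>Real parts against \<open>x\<close> and \<open>i x\<close> recover the complex adjoint relation.\<close>
  show "y \<in> ell2_dom D" if adj: "\<forall>a\<in>ell2_dom D. inner (ell2_op T a) y = inner a z" for y z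
  proof -
    have re: "Re (linner (T x) (vec_of y)) = Re (linner x (vec_of z))" if "x \<in> D" for x
      using adj[rule_format, OF to_ell2_in_ell2_dom[OF that]] that
      by (simp add: inner_ell2.rep_eq ell2_op_def to_ell2_inverse dom_l2 op_l2)
    have "linner (T x) (vec_of y) = linner x (vec_of z)" if x: "x \<in> D" for x
    proof -
      have "Re (\<i> * linner (T x) (vec_of y)) = Re (\<i> * linner x (vec_of z))"
        using re[OF l2_dom_scale[OF x, of \<i>]] l2_op_scale[OF x, of \<i>] x dom_l2 op_l2 vec_of[of y] vec_of[of z]
        by (simp add: linner_scale_left)
      then show ?thesis using re[OF x] by (simp add: complex_eq_iff)
    qed
    then have "vec_of y \<in> D" using l2_adjoint_dom[OF vec_of vec_of] by blast
    then show ?thesis by (simp add: ell2_dom_def)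
  qed
qed

end

theorem theorem3p8:
  fixes D :: "vec set" and T :: "vec \<Rightarrow> vec"
  assumes "selfadjoint D T" and "\<not> bounded_op D T"
  shows "ess_num_range D T =
    complex_of_real ` {r. ereal r \<in> conv_ereal (ext_ess_spec D T) - {\<infinity>, -\<infinity>}}"
proof -
  \<comment> \<open>The characterisation holds for every selfadjoint operator.\<close>
  interpret l2_selfadjoint D T by (rule l2_selfadjoint.intro) (rule assms(1))
  interpret H: selfadjoint_operator "ell2_dom D" "ell2_op T" by (rule selfadjoint_operator_ell2)
  have "ereal r \<in> conv_ereal (ext_ess_spec D T) - {\<infinity>, -\<infinity>} \<longleftrightarrow> r \<in> ess_numrange (ell2_dom D) (ell2_op T)"
    for r
    unfolding H.ess_numrange_iff conv_ereal_def ext_ess_spec_def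
    by (auto simp: ess_spec_iff bounded_above_op_iff bounded_below_op_iff)
  then show ?thesis by (auto simp: ess_num_range_eq)
qed

end
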